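(* Let $p_n=P_n^{(\alpha_n,\beta_n)}$ be Jacobi polynomials (of degree $n$) with complex parameters. Suppose the root-counting measures $\mu_n$ of $p_n$ converge weakly to a compactly supported measure $\mu$ and the root-counting measures $\mu_n'$ of $p_n'$ converge weakly to a compactly supported measure $\mu'$. Then one of the following holds: (i) the sequences $\{(\alpha_n+\beta_n)/n\}$ and $\{(\beta_n-\alpha_n)/n\}$ (hence $\{\alpha_n/n\}$ and $\{\beta_n/n\}$) are bounded; (ii) $\{(\alpha_n+\beta_n)/n\}$ is unbounded and $\{(\beta_n-\alpha_n)/n\}$ is bounded, in which case $\mu_n\to\delta_0$ (equivalently $\mathcal C_\mu(z)=1/z$); (iii) both $\{(\alpha_n+\beta_n)/n\}$ and $\{(\beta_n-\alpha_n)/n\}$ are unbounded, in which case there exist $\kappa\in\mathbb C$ and a subsequence $\{n_m\}$ with $\lim_{m\to\infty}\frac{\beta_{n_m}-\alpha_{n_m}}{\alpha_{n_m}+\beta_{n_m}}=\kappa$ and $\mu_{n_m}\to\delta_\kappa$ weakly.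
   Context: $P_n^{(\alpha,\beta)}(z)=2^{-n}\sum_{k=0}^n\binom{n+\alpha}{n-k}\binom{n+\beta}{k}(z-1)^k(z+1)^{n-k}$ with $\binom{\gamma}{k}=\gamma(\gamma-1)\cdots(\gamma-k+1)/k!$; it satisfies $(1-z^2)y''+(\beta-\alpha-(\alpha+\beta+2)z)y'+n(n+\alpha+\beta+1)y=0$. Root-counting measure: $\frac1n\sum\delta_{\xi_i}$ over the roots. $\mathcal C_\mu(z)=\int\frac{d\mu(\xi)}{z-\xi}$; $\delta_\kappa$ is the unit point mass at $\kappa$. *)

theory Defs
  imports "HOL-Probability.Probability" "HOL-Computational_Algebra.Polynomial"
begin

definition jacobi :: "nat \<Rightarrow> complex \<Rightarrow> complex \<Rightarrow> complex poly" where
  "jacobi n a b = smult (1 / 2 ^ n)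
     (\<Sum>k = 0..n. smult (((of_nat n + a) gchoose (n - k)) * ((of_nat n + b) gchoose k))
                     ([:-1, 1:] ^ k * [:1, 1:] ^ (n - k)))"

text \<open>Integral of f against the root-counting measure (1/deg p) sum_i delta_(xi_i)
  of p (roots counted with multiplicity).\<close>
definition root_integral :: "complex poly \<Rightarrow> (complex \<Rightarrow> real) \<Rightarrow> real" where
  "root_integral p f =
     (\<Sum>\<xi>\<in>{\<xi>. poly p \<xi> = 0}. real (order \<xi> p) * f \<xi>) / real (degree p)"

definition roots_weak_conv :: "(nat \<Rightarrow> complex poly) \<Rightarrow> complex measure \<Rightarrow> bool" where
  "roots_weak_conv p \<mu> \<longleftrightarrow>
     (\<forall>f :: complex \<Rightarrow> real. continuous_on UNIV f \<and> bounded (range f) \<longrightarrow>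
        (\<lambda>n. root_integral (p n) f) \<longlonglongrightarrow> integral\<^sup>L \<mu> f)"

definition compactly_supported :: "complex measure \<Rightarrow> bool" where
  "compactly_supported \<mu> \<longleftrightarrow> sets \<mu> = sets borel \<and> finite_measure \<mu> \<and>
     (\<exists>K. compact K \<and> emeasure \<mu> (UNIV - K) = 0)"

end

theory Submission
  imports Defs "HOL-Computational_Algebra.Fundamental_Theorem_Algebra"
begin

text \<open>The Jacobi differential equation gives three-term recurrences for the coefficients of
  \<open>p\<^sub>n(z)\<close> and of \<open>p\<^sub>n(z + c)\<close>. If \<open>|\<alpha>\<^sub>n + \<beta>\<^sub>n| \<ggreater> n\<close>, the centre
  \<open>c\<^sub>n = (\<beta>\<^sub>n - \<alpha>\<^sub>n) / (\<alpha>\<^sub>n + \<beta>\<^sub>n + 2)\<close> kills one term of the shifted recurrence, which then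
  forces the coefficients of \<open>p\<^sub>n(z + c\<^sub>n)\<close> to be at most \<open>(g n)\<^sup>n\<^sup>-\<^sup>k / (n - k)!\<close> times the leading
  one. By Landau's inequality (Mahler measure \<open>\<le>\<close> \<open>\<ell>\<^sup>1\<close>-norm of the coefficients) at most
  \<open>e g n / \<rho>\<close> roots lie outside the disc of radius \<open>\<rho>\<close> about \<open>c\<^sub>n\<close>, so \<open>\<mu>\<^sub>n\<close> concentrates at
  \<open>\<kappa> = lim c\<^sub>n\<close>. Symmetrically, if \<open>|\<beta>\<^sub>n - \<alpha>\<^sub>n| \<ggreater> n + |\<alpha>\<^sub>n + \<beta>\<^sub>n|\<close> the coefficients of
  \<open>p\<^sub>n\<close> are dominated by the constant term and almost all roots escape to infinity, which is
  impossible when \<open>\<mu>\<^sub>n\<close> converges to a compactly supported measure. Hence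
  \<open>|\<beta>\<^sub>n - \<alpha>\<^sub>n| = O(n + |\<alpha>\<^sub>n + \<beta>\<^sub>n|)\<close>, and the trichotomy follows by passing to subsequences.\<close>


section \<open>The Jacobi differential equation\<close>

definition z_minus_one :: "complex poly" where "z_minus_one = [:-1, 1:]"
definition z_plus_one :: "complex poly" where "z_plus_one = [:1, 1:]"

definition jacobi_op :: "nat \<Rightarrow> complex \<Rightarrow> complex \<Rightarrow> complex poly \<Rightarrow> complex poly" where
  "jacobi_op n a b y =
     - (z_minus_one * z_plus_one * pderiv (pderiv y))
     - (([:a:] + 1) * z_plus_one + ([:b:] + 1) * z_minus_one) * pderiv y
     + [:of_nat n * (of_nat n + a + b + 1):] * y"

definition jacobi_coeff :: "nat \<Rightarrow> complex \<Rightarrow> complex \<Rightarrow> nat \<Rightarrow> complex" where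
  "jacobi_coeff n a b k = ((of_nat n + a) gchoose (n - k)) * ((of_nat n + b) gchoose k)"

definition jacobi_monomial :: "nat \<Rightarrow> nat \<Rightarrow> complex poly" where
  "jacobi_monomial n k = z_minus_one ^ k * z_plus_one ^ (n - k)"

text \<open>The operator maps the \<open>k\<close>-th summand of the Jacobi polynomial to the difference of
  two consecutive terms of this sequence, so it annihilates the sum by telescoping.\<close>
definition jacobi_telescope :: "nat \<Rightarrow> complex \<Rightarrow> complex \<Rightarrow> nat \<Rightarrow> complex poly" where
  "jacobi_telescope n a b k =
     (if k = 0 then 0
      else smult (jacobi_coeff n a b (k - 1) * of_nat (n - (k - 1)) * (of_nat (n - (k - 1)) + b))
             (jacobi_monomial n k - jacobi_monomial n (k - 1)))"

lemma smult_eq_pCons_mult: "smult c p = [:c:] * p"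
  by simp

lemma jacobi_op_smult: "jacobi_op n a b (smult c y) = smult c (jacobi_op n a b y)"
  unfolding jacobi_op_def pderiv_smult unfolding smult_eq_pCons_mult by algebra

lemma pderiv_sum: "pderiv (sum f A) = (\<Sum>x\<in>A. pderiv (f x))"
  using higher_pderiv_sum[of 1 f A] by simp

lemma jacobi_op_sum: "jacobi_op n a b (sum f A) = (\<Sum>x\<in>A. jacobi_op n a b (f x))"
  unfolding jacobi_op_def pderiv_sum
  by (simp add: sum_distrib_left sum_subtractf sum.distrib sum_negf)

lemma pderiv_z_minus_one [simp]: "pderiv z_minus_one = 1"
  by (simp add: z_minus_one_def pderiv_pCons)

lemma pderiv_z_plus_one [simp]: "pderiv z_plus_one = 1"
  by (simp add: z_plus_one_def pderiv_pCons)

lemma linear_mult_pderiv_power: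
  assumes "pderiv q = 1"
  shows "q * pderiv (q ^ i) = of_nat i * q ^ i"
proof (cases i)
  case (Suc m)
  show ?thesis unfolding Suc pderiv_power_Suc assms
    by (simp only: smult_eq_pCons_mult of_nat_poly[symmetric] power_Suc) (simp add: algebra_simps)
qed simp

lemma pderiv_jacobi_monomial:
  "z_minus_one * z_plus_one * pderiv (z_minus_one ^ i * z_plus_one ^ j)
     = (of_nat i * z_plus_one + of_nat j * z_minus_one) * (z_minus_one ^ i * z_plus_one ^ j)"
proof -
  have "z_minus_one * z_plus_one * pderiv (z_minus_one ^ i * z_plus_one ^ j)
      = z_minus_one ^ i * (z_plus_one * pderiv (z_plus_one ^ j)) * z_minus_one
        + z_plus_one ^ j * (z_minus_one * pderiv (z_minus_one ^ i)) * z_plus_one"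
    by (simp add: pderiv_mult algebra_simps)
  then show ?thesis
    by (simp add: linear_mult_pderiv_power algebra_simps)
qed

lemma pderiv2_jacobi_monomial:
  "z_minus_one * z_plus_one * pderiv (pderiv (z_minus_one ^ i * z_plus_one ^ j))
     = (of_nat i + of_nat j) * (z_minus_one ^ i * z_plus_one ^ j)
       + (of_nat i * z_plus_one + of_nat j * z_minus_one - z_minus_one - z_plus_one)
         * pderiv (z_minus_one ^ i * z_plus_one ^ j)"
proof -
  have "pderiv (z_minus_one * z_plus_one * pderiv (z_minus_one ^ i * z_plus_one ^ j))
      = pderiv ((of_nat i * z_plus_one + of_nat j * z_minus_one) * (z_minus_one ^ i * z_plus_one ^ j))"
    by (simp only: pderiv_jacobi_monomial)
  then show ?thesis
    by (simp add: pderiv_mult pderiv_add algebra_simps)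
qed

lemma jacobi_op_monomial_ring_identity:
  fixes u v d dd y a b K i j :: "'a :: comm_ring_1"
  assumes d: "u * v * d = (i * v + j * u) * y"
    and dd: "u * v * dd = (i + j) * y + (i * v + j * u - u - v) * d"
  shows "u * v * (- (u * v * dd) - ((a + 1) * v + (b + 1) * u) * d + K * y)
     = (- (i * (i + a)) * v ^ 2 - j * (j + b) * u ^ 2
        + (K - 2 * i * j - (a + 1) * j - (b + 1) * i) * u * v) * y"
proof -
  have "u * v * (- (u * v * dd) - ((a + 1) * v + (b + 1) * u) * d + K * y)
      = - (u * v * (u * v * dd)) - ((a + 1) * v + (b + 1) * u) * (u * v * d) + K * u * v * y"
    by (simp add: algebra_simps)
  also have "u * v * (u * v * dd) = u * v * ((i + j) * y) + (i * v + j * u - u - v) * (u * v * d)"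
    unfolding dd by (simp add: algebra_simps)
  finally show ?thesis
    unfolding d by (simp add: algebra_simps power2_eq_square)
qed

lemma jacobi_op_monomial:
  "z_minus_one * z_plus_one * jacobi_op n a b (z_minus_one ^ i * z_plus_one ^ j)
     = (- (of_nat i * (of_nat i + [:a:])) * z_plus_one ^ 2 - of_nat j * (of_nat j + [:b:]) * z_minus_one ^ 2
        + ([:of_nat n * (of_nat n + a + b + 1):] - 2 * of_nat i * of_nat j
           - ([:a:] + 1) * of_nat j - ([:b:] + 1) * of_nat i) * z_minus_one * z_plus_one)
       * (z_minus_one ^ i * z_plus_one ^ j)"
  unfolding jacobi_op_def
  by (rule jacobi_op_monomial_ring_identity[OF pderiv_jacobi_monomial pderiv2_jacobi_monomial])

lemma gbinomial_Suc_mult: "(x gchoose (Suc k)) * of_nat (Suc k) = (x gchoose k) * (x - of_nat k)"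
  using gbinomial_absorb_comp[of x k] gbinomial_absorption[of k x] by (simp add: algebra_simps)

lemma jacobi_coeff_Suc:
  assumes "k < n"
  shows "jacobi_coeff n a b (Suc k) * (of_nat (Suc k) * (of_nat (Suc k) + a))
       = jacobi_coeff n a b k * (of_nat (n - k) * (of_nat (n - k) + b))"
proof -
  obtain m where m: "n - k = Suc m" "n - Suc k = m"
    using assms by (metis Suc_diff_Suc)
  have n: "of_nat n = (of_nat k + of_nat (Suc m) :: complex)"
    using m assms by (metis add_diff_inverse_nat not_less_iff_gr_or_eq of_nat_add)
  have "jacobi_coeff n a b (Suc k) * (of_nat (Suc k) * (of_nat (Suc k) + a))
      = ((of_nat n + a) gchoose m) * (of_nat n + a - of_nat m)
        * (((of_nat n + b) gchoose (Suc k)) * of_nat (Suc k))"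
    unfolding jacobi_coeff_def m n by (simp add: algebra_simps)
  also have "\<dots> = ((of_nat n + a) gchoose (Suc m)) * of_nat (Suc m)
                  * ((of_nat n + b) gchoose k) * (of_nat n + b - of_nat k)"
    unfolding gbinomial_Suc_mult by (simp add: algebra_simps)
  also have "\<dots> = jacobi_coeff n a b k * (of_nat (n - k) * (of_nat (n - k) + b))"
    unfolding jacobi_coeff_def m n by (simp add: algebra_simps)
  finally show ?thesis .
qed

lemma jacobi_monomial_pred:
  assumes "1 \<le> k" "k \<le> n"
  shows "z_minus_one * z_plus_one * jacobi_monomial n (k - 1) = z_plus_one ^ 2 * jacobi_monomial n k"
proof -
  obtain k' where k: "k = Suc k'" using assms by (cases k) auto
  have "n - k' = Suc (n - Suc k')" using assms k by arith
  then show ?thesis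
    unfolding jacobi_monomial_def k diff_Suc_1 by (simp add: algebra_simps power2_eq_square)
qed

lemma jacobi_monomial_Suc:
  assumes "k < n"
  shows "z_minus_one * z_plus_one * jacobi_monomial n (Suc k) = z_minus_one ^ 2 * jacobi_monomial n k"
proof -
  have "n - k = Suc (n - Suc k)" using assms by arith
  then show ?thesis
    unfolding jacobi_monomial_def by (simp add: algebra_simps power2_eq_square)
qed

lemma jacobi_op_term:
  assumes "k \<le> n"
  shows "jacobi_op n a b (smult (jacobi_coeff n a b k) (jacobi_monomial n k))
       = jacobi_telescope n a b k - jacobi_telescope n a b (Suc k)"
proof -
  define x where "x = of_nat k * (of_nat k + a)"
  define y where "y = of_nat (n - k) * (of_nat (n - k) + b)"
  define K where "K = of_nat n * (of_nat n + a + b + 1) - 2 * of_nat k * of_nat (n - k)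
                      - (a + 1) * of_nat (n - k) - (b + 1) * of_nat k"
  have "of_nat n = (of_nat k + of_nat (n - k) :: complex)"
    using assms by (simp add: of_nat_diff)
  then have K: "K = x + y"
    unfolding K_def x_def y_def by (simp add: algebra_simps)
  define C where "C = jacobi_coeff n a b k"
  define T where "T = jacobi_monomial n k"
  have "z_minus_one * z_plus_one * jacobi_op n a b (smult C T)
      = smult C (([:-x:] * z_plus_one ^ 2 + [:-y:] * z_minus_one ^ 2 + [:K:] * z_minus_one * z_plus_one) * T)"
    unfolding jacobi_op_smult mult_smult_right T_def jacobi_monomial_def jacobi_op_monomial
    by (simp add: x_def y_def K_def of_nat_poly numeral_poly algebra_simps
        smult_add_left smult_diff_left smult_add_right smult_diff_right)
  also have "\<dots> = smult (C * x) ((z_minus_one * z_plus_one - z_plus_one ^ 2) * T)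
                  - smult (C * y) ((z_minus_one ^ 2 - z_minus_one * z_plus_one) * T)"
    unfolding K by (simp add: algebra_simps smult_add_right smult_diff_right smult_add_left smult_diff_left)
  also have "smult (C * x) ((z_minus_one * z_plus_one - z_plus_one ^ 2) * T)
           = z_minus_one * z_plus_one * jacobi_telescope n a b k"
  proof (cases k)
    case (Suc k')
    have "jacobi_coeff n a b k' * (of_nat (n - k') * (of_nat (n - k') + b)) = C * x"
      using jacobi_coeff_Suc[of k' n a b] assms Suc by (simp add: C_def x_def)
    moreover have "z_minus_one * z_plus_one * jacobi_monomial n k' = z_plus_one ^ 2 * T"
      using jacobi_monomial_pred[of k n] assms Suc by (simp add: T_def)
    ultimately show ?thesis
      unfolding jacobi_telescope_def using Suc by (simp add: T_def algebra_simps)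
  qed (simp add: jacobi_telescope_def x_def)
  also have "smult (C * y) ((z_minus_one ^ 2 - z_minus_one * z_plus_one) * T)
           = z_minus_one * z_plus_one * jacobi_telescope n a b (Suc k)"
  proof (cases "k = n")
    case False
    then have "z_minus_one * z_plus_one * jacobi_monomial n (Suc k) = z_minus_one ^ 2 * T"
      using jacobi_monomial_Suc assms by (simp add: T_def)
    then show ?thesis
      unfolding jacobi_telescope_def by (simp add: C_def T_def y_def algebra_simps)
  qed (simp add: jacobi_telescope_def y_def)
  finally have "z_minus_one * z_plus_one * jacobi_op n a b (smult C T)
      = z_minus_one * z_plus_one * (jacobi_telescope n a b k - jacobi_telescope n a b (Suc k))"
    by (simp add: algebra_simps)
  moreover have "z_minus_one * z_plus_one \<noteq> 0"
    by (simp add: z_minus_one_def z_plus_one_def)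
  ultimately show ?thesis
    by (simp add: C_def T_def)
qed

lemma jacobi_op_jacobi: "jacobi_op n a b (jacobi n a b) = 0"
proof -
  have jacobi_eq: "jacobi n a b
      = smult (1 / 2 ^ n) (\<Sum>k\<le>n. smult (jacobi_coeff n a b k) (jacobi_monomial n k))"
    unfolding jacobi_def jacobi_coeff_def jacobi_monomial_def z_minus_one_def z_plus_one_def
      atLeast0AtMost ..
  have "jacobi_op n a b (jacobi n a b)
      = smult (1 / 2 ^ n) (\<Sum>k\<le>n. jacobi_telescope n a b k - jacobi_telescope n a b (Suc k))"
    unfolding jacobi_eq jacobi_op_smult[of n a b "1 / 2 ^ n"] jacobi_op_sum
    by (rule arg_cong, rule sum.cong[OF refl], rule jacobi_op_term) simp
  also have "\<dots> = smult (1 / 2 ^ n) (jacobi_telescope n a b 0 - jacobi_telescope n a b (Suc n))"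
    by (subst sum_telescope) simp
  also have "\<dots> = 0"
    by (simp add: jacobi_telescope_def)
  finally show ?thesis .
qed

theorem jacobi_ode:
  "[:1, 0, -1:] * pderiv (pderiv (jacobi n a b)) + [:b - a, - (a + b + 2):] * pderiv (jacobi n a b)
     + smult (of_nat n * (of_nat n + a + b + 1)) (jacobi n a b) = 0"
proof -
  have "[:1, 0, -1:] = - (z_minus_one * z_plus_one)"
    by (simp add: z_minus_one_def z_plus_one_def)
  moreover have "[:b - a, - (a + b + 2):] = - (([:a:] + 1) * z_plus_one + ([:b:] + 1) * z_minus_one)"
    by (simp add: z_minus_one_def z_plus_one_def one_pCons algebra_simps)
  ultimately have "[:1, 0, -1:] * pderiv (pderiv (jacobi n a b))
      + [:b - a, - (a + b + 2):] * pderiv (jacobi n a b)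
      + smult (of_nat n * (of_nat n + a + b + 1)) (jacobi n a b) = jacobi_op n a b (jacobi n a b)"
    unfolding jacobi_op_def smult_eq_pCons_mult by (simp only:) (simp add: algebra_simps)
  then show ?thesis
    using jacobi_op_jacobi by simp
qed

section \<open>Coefficient recurrences\<close>

lemma pcompose_shift_ode:
  fixes p :: "'a :: idom poly"
  assumes "[:1, 0, -1:] * pderiv (pderiv p) + [:B, - (A + 2):] * pderiv p + smult K p = 0"
  shows "[:1 - c ^ 2, - 2 * c, -1:] * pderiv (pderiv (pcompose p [:c, 1:]))
     + [:B - (A + 2) * c, - (A + 2):] * pderiv (pcompose p [:c, 1:]) + smult K (pcompose p [:c, 1:]) = 0"
proof -
  have pderiv_shift: "pderiv (pcompose q [:c, 1:]) = pcompose (pderiv q) [:c, 1:]" for q :: "'a poly"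
    by (simp add: pderiv_pcompose pderiv_pCons)
  have "pcompose [:1, 0, -1:] [:c, 1:] = [:1 - c ^ 2, - 2 * c, -1 :: 'a:]"
    by (simp add: pcompose_pCons algebra_simps power2_eq_square)
  moreover have "pcompose [:B, - (A + 2):] [:c, 1:] = [:B - (A + 2) * c, - (A + 2):]"
    by (simp add: pcompose_pCons algebra_simps)
  moreover have "pcompose ([:1, 0, -1:] * pderiv (pderiv p) + [:B, - (A + 2):] * pderiv p + smult K p)
                   [:c, 1:] = 0"
    using assms by simp
  ultimately show ?thesis
    unfolding pcompose_add pcompose_mult pcompose_smult by (simp only: pderiv_shift)
qed

lemma coeff_linear_mult:
  "coeff ([:x0, x1:] * p) k = x0 * coeff p k + (if k = 0 then 0 else x1 * coeff p (k - 1))"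
  by (cases k) (auto simp: mult_pCons_left)

lemma coeff_quadratic_mult:
  "coeff ([:x0, x1, x2:] * p) k = x0 * coeff p k + (if k = 0 then 0 else x1 * coeff p (k - 1))
     + (if k \<le> 1 then 0 else x2 * coeff p (k - 2))"
  by (cases k; cases "k - 1") (auto simp: mult_pCons_left algebra_simps)

lemma ode_coeff_recurrence:
  fixes Q :: "'a :: idom poly"
  assumes "[:1 - c ^ 2, - 2 * c, -1:] * pderiv (pderiv Q) + [:B', - (A + 2):] * pderiv Q + smult K Q = 0"
  shows "(1 - c ^ 2) * of_nat (k + 1) * of_nat (k + 2) * coeff Q (k + 2)
     + (B' * of_nat (k + 1) - 2 * c * of_nat k * of_nat (k + 1)) * coeff Q (k + 1)
     + (K - of_nat k * (of_nat k - 1) - (A + 2) * of_nat k) * coeff Q k = 0"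
proof -
  have "coeff ([:1 - c ^ 2, - 2 * c, -1:] * pderiv (pderiv Q) + [:B', - (A + 2):] * pderiv Q
              + smult K Q) k = 0"
    using assms by simp
  then show ?thesis
    unfolding coeff_add coeff_quadratic_mult coeff_linear_mult coeff_smult
    by (cases k; cases "k - 1") (auto simp: coeff_pderiv algebra_simps)
qed

lemma jacobi_shift_coeff_recurrence:
  fixes n k :: nat and a b c :: complex
  defines "Q \<equiv> pcompose (jacobi n a b) [:c, 1:]"
  shows "(1 - c ^ 2) * of_nat (k + 1) * of_nat (k + 2) * coeff Q (k + 2)
     + ((b - a - (a + b + 2) * c) * of_nat (k + 1) - 2 * c * of_nat k * of_nat (k + 1)) * coeff Q (k + 1)
     + (of_nat n - of_nat k) * (of_nat n + of_nat k + (a + b) + 1) * coeff Q k = 0"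
proof -
  have "[:1, 0, -1:] * pderiv (pderiv (jacobi n a b)) + [:b - a, - ((a + b) + 2):] * pderiv (jacobi n a b)
     + smult (of_nat n * (of_nat n + (a + b) + 1)) (jacobi n a b) = 0"
    using jacobi_ode[of n a b] by (simp add: add.assoc)
  from ode_coeff_recurrence[OF pcompose_shift_ode[OF this, of c], of k]
  show ?thesis
    unfolding Q_def by (simp add: algebra_simps)
qed

section \<open>Monic polynomials from roots and Landau's inequality\<close>

definition root_poly :: "complex multiset \<Rightarrow> complex poly" where
  "root_poly X = (\<Prod>x\<in>#X. [:-x, 1:])"

lemma root_poly_add_mset: "root_poly (add_mset x X) = [:-x, 1:] * root_poly X"
  by (simp add: root_poly_def)

lemma root_poly_nonzero: "root_poly X \<noteq> 0"
  unfolding root_poly_def by (auto simp: prod_mset_zero_iff)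

lemma degree_root_poly: "degree (root_poly X) = size X"
proof (induction X)
  case (add x X)
  have "degree ([:-x, 1:] * root_poly X) = degree [:-x, 1 :: complex:] + degree (root_poly X)"
    by (rule degree_mult_eq) (simp_all add: root_poly_nonzero)
  with add show ?case
    by (simp add: root_poly_add_mset)
qed (simp add: root_poly_def)

lemma coeff_root_poly_size: "coeff (root_poly X) (size X) = 1"
proof (induction X)
  case (add x X)
  have "coeff (root_poly X) (Suc (size X)) = 0"
    by (simp add: coeff_eq_0 degree_root_poly)
  with add show ?case
    by (simp add: root_poly_add_mset coeff_linear_mult)
qed (simp add: root_poly_def)

lemma root_poly_proots: "(p :: complex poly) \<noteq> 0 \<Longrightarrow> p = smult (lead_coeff p) (root_poly (proots p))"
  using complex_poly_decompose_multiset[of p] by (simp add: root_poly_def)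

lemma root_poly_shift: "pcompose (root_poly X) [:c, 1:] = root_poly (image_mset (\<lambda>x. x - c) X)"
proof (induction X)
  case (add x X)
  have "pcompose [:-x, 1:] [:c, 1:] = [:- (x - c), 1:]"
    by (simp add: pcompose_pCons)
  with add show ?case
    by (simp only: root_poly_add_mset pcompose_mult image_mset_add_mset)
qed (simp add: root_poly_def pcompose_1)

lemma root_poly_scale:
  fixes s :: complex
  assumes "s \<noteq> 0"
  shows "root_poly X = smult (s ^ size X) (pcompose (root_poly (image_mset (\<lambda>x. x / s) X)) [:0, 1 / s:])"
proof (induction X)
  case (add x X)
  have "[:-x, 1:] = smult s (pcompose [:-x / s, 1:] [:0, 1 / s:])"
    using assms by (simp add: pcompose_pCons)
  then have "root_poly (add_mset x X)
      = smult s (pcompose [:-x / s, 1:] [:0, 1 / s:])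
        * smult (s ^ size X) (pcompose (root_poly (image_mset (\<lambda>x. x / s) X)) [:0, 1 / s:])"
    using add by (simp add: root_poly_add_mset)
  also have "\<dots> = smult (s ^ size (add_mset x X))
                    (pcompose ([:-x / s, 1:] * root_poly (image_mset (\<lambda>x. x / s) X)) [:0, 1 / s:])"
    unfolding pcompose_mult
    by (simp only: mult_smult_left mult_smult_right smult_smult size_add_mset power_Suc mult.commute)
  finally show ?case
    by (simp add: root_poly_add_mset)
qed (simp add: root_poly_def pcompose_1)

lemma reflect_root_poly:
  "0 \<notin># X \<Longrightarrow> reflect_poly (root_poly X) = smult (coeff (root_poly X) 0) (root_poly (image_mset inverse X))"
proof (induction X)
  case (add x X)
  then have "x \<noteq> 0" by auto
  then have "reflect_poly [:-x, 1:] = smult (- x) [:- inverse x, 1:]"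
    by (simp add: reflect_poly_def)
  with add have "reflect_poly (root_poly (add_mset x X))
      = smult (- x) [:- inverse x, 1:] * smult (coeff (root_poly X) 0) (root_poly (image_mset inverse X))"
    by (simp only: root_poly_add_mset reflect_poly_mult) simp
  also have "\<dots> = smult (- x * coeff (root_poly X) 0) ([:- inverse x, 1:] * root_poly (image_mset inverse X))"
    by (simp only: mult_smult_left mult_smult_right smult_smult mult.commute)
  also have "- x * coeff (root_poly X) 0 = coeff (root_poly (add_mset x X)) 0"
    by (simp add: root_poly_add_mset)
  finally show ?case
    by (simp only: root_poly_add_mset image_mset_add_mset)
qed (simp add: root_poly_def)

lemma coeff_root_poly_inverse:
  assumes "0 \<notin># X" "k \<le> size X"
  shows "coeff (root_poly (image_mset inverse X)) k = coeff (root_poly X) (size X - k) / coeff (root_poly X) 0"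
proof -
  have "coeff (root_poly X) 0 = (\<Prod>x\<in>#X. - x)"
    by (simp add: poly_0_coeff_0[symmetric] root_poly_def poly_prod_mset)
  with assms(1) have "coeff (root_poly X) 0 \<noteq> 0"
    by (auto simp: prod_mset_zero_iff)
  moreover have "coeff (reflect_poly (root_poly X)) k = coeff (root_poly X) (size X - k)"
    using assms(2) by (simp add: coeff_reflect_poly degree_root_poly)
  ultimately show ?thesis
    using reflect_root_poly[OF assms(1)] by (simp add: field_simps)
qed

lemma size_filter_image_mset: "size (filter_mset P (image_mset f M)) = size (filter_mset (\<lambda>x. P (f x)) M)"
  by (simp add: image_mset_filter_mset_swap[symmetric])

text \<open>Replacing the factor \<open>z - x\<close> by \<open>x\<^sup>* z - 1\<close> for \<open>|x| > 1\<close> does not change the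
  \<open>\<ell>\<^sup>2\<close>-norm of the coefficient vector, and makes the leading coefficient
  \<open>\<Prod> max 1 |x|\<close>, the Mahler measure.\<close>
definition landau_factor :: "complex \<Rightarrow> complex poly" where
  "landau_factor x = (if norm x \<le> 1 then [:-x, 1:] else [:-1, cnj x:])"

definition landau_poly :: "complex multiset \<Rightarrow> complex poly" where
  "landau_poly X = (\<Prod>x\<in>#X. landau_factor x)"

definition coeff_sq_sum :: "nat \<Rightarrow> complex poly \<Rightarrow> real" where
  "coeff_sq_sum N p = (\<Sum>k<N. (norm (coeff p k))\<^sup>2)"

lemma coeff_sq_sum_swap_factor:
  assumes "degree S + 1 < N"
  shows "coeff_sq_sum N ([:-x, 1:] * S) = coeff_sq_sum N ([:-1, cnj x:] * S)"
proof -
  have norm_identity: "(norm (v - x * w))\<^sup>2 - (norm (cnj x * v - w))\<^sup>2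
      = ((norm v)\<^sup>2 - (norm w)\<^sup>2) * (1 - (norm x)\<^sup>2)" for v w :: complex
    unfolding cmod_power2 by (simp add: power2_eq_square algebra_simps)
  define u where "u k = (if k = 0 then 0 else coeff S (k - 1))" for k
  have "coeff ([:-x, 1:] * S) k = u k - x * coeff S k"
    and "coeff ([:-1, cnj x:] * S) k = cnj x * u k - coeff S k" for k
    unfolding coeff_linear_mult u_def by simp_all
  then have "coeff_sq_sum N ([:-x, 1:] * S) - coeff_sq_sum N ([:-1, cnj x:] * S)
      = (\<Sum>k<N. ((norm (u k))\<^sup>2 - (norm (coeff S k))\<^sup>2) * (1 - (norm x)\<^sup>2))"
    unfolding coeff_sq_sum_def sum_subtractf[symmetric] by (simp add: norm_identity)
  also have "\<dots> = ((\<Sum>k<N. (norm (u k))\<^sup>2) - (\<Sum>k<N. (norm (coeff S k))\<^sup>2)) * (1 - (norm x)\<^sup>2)"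
    by (simp add: sum_subtractf[symmetric] sum_distrib_right left_diff_distrib)
  also have "(\<Sum>k<N. (norm (u k))\<^sup>2) = (\<Sum>k<N. (norm (coeff S k))\<^sup>2)"
  proof -
    obtain M where M: "N = Suc M"
      using assms by (cases N) auto
    have "(\<Sum>k<N. (norm (u k))\<^sup>2) = (\<Sum>k<M. (norm (coeff S k))\<^sup>2)"
      unfolding M sum.lessThan_Suc_shift by (simp add: u_def)
    also have "\<dots> = (\<Sum>k<N. (norm (coeff S k))\<^sup>2)"
      using assms M by (simp add: coeff_eq_0)
    finally show ?thesis .
  qed
  finally show ?thesis
    by simp
qed

lemma degree_landau_poly_le: "degree (landau_poly X) \<le> size X"
proof (induction X)
  case (add x X)
  have "degree (landau_factor x * landau_poly X) \<le> degree (landau_factor x) + degree (landau_poly X)"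
    by (rule degree_mult_le)
  also have "degree (landau_factor x) \<le> 1"
    by (simp add: landau_factor_def)
  finally show ?case
    using add by (simp add: landau_poly_def)
qed (simp add: landau_poly_def)

lemma coeff_sq_sum_root_poly_eq:
  "degree S + size X + 1 < N \<Longrightarrow> coeff_sq_sum N (root_poly X * S) = coeff_sq_sum N (landau_poly X * S)"
proof (induction X arbitrary: S)
  case (add x X)
  have "degree ([:-x, 1:] * S) \<le> degree S + 1"
    using degree_mult_le[of "[:-x, 1:]" S] by simp
  with add.prems have "coeff_sq_sum N (root_poly X * ([:-x, 1:] * S))
      = coeff_sq_sum N (landau_poly X * ([:-x, 1:] * S))"
    by (intro add.IH) simp
  also have "\<dots> = coeff_sq_sum N (landau_factor x * (landau_poly X * S))"
  proof (cases "norm x \<le> 1")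
    case False
    have "degree (landau_poly X * S) \<le> size X + degree S"
      using degree_mult_le[of "landau_poly X" S] degree_landau_poly_le[of X] by simp
    with add.prems have "degree (landau_poly X * S) + 1 < N"
      by simp
    from coeff_sq_sum_swap_factor[OF this, of x] False show ?thesis
      by (simp add: landau_factor_def algebra_simps)
  qed (simp add: landau_factor_def algebra_simps)
  finally show ?case
    by (simp add: root_poly_add_mset landau_poly_def algebra_simps)
qed (simp add: root_poly_def landau_poly_def)

lemma norm_coeff_landau_poly_size: "norm (coeff (landau_poly X) (size X)) = (\<Prod>x\<in>#X. max 1 (norm x))"
proof (induction X)
  case (add x X)
  have "coeff (landau_poly X) (Suc (size X)) = 0"
    using degree_landau_poly_le[of X] by (simp add: coeff_eq_0)
  with add show ?case
    by (simp add: landau_poly_def landau_factor_def coeff_linear_mult norm_mult)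
qed (simp add: landau_poly_def)

lemma sum_squares_le_square_sum:
  fixes f :: "'a \<Rightarrow> real"
  assumes "finite A" "\<And>x. x \<in> A \<Longrightarrow> 0 \<le> f x"
  shows "(\<Sum>x\<in>A. (f x)\<^sup>2) \<le> (\<Sum>x\<in>A. f x)\<^sup>2"
  using assms
proof (induction A rule: finite_induct)
  case (insert a A)
  then have "0 \<le> f a * (\<Sum>x\<in>A. f x)"
    by (simp add: sum_nonneg)
  with insert show ?case
    by (simp add: power2_eq_square algebra_simps)
qed simp

lemma landau_inequality:
  "(\<Prod>x\<in>#X. max 1 (norm x)) \<le> (\<Sum>k\<le>size X. norm (coeff (root_poly X) k))"
proof -
  define N where "N = size X + 2"
  have "(\<Prod>x\<in>#X. max 1 (norm x))\<^sup>2 \<le> coeff_sq_sum N (landau_poly X)"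
    unfolding coeff_sq_sum_def norm_coeff_landau_poly_size[symmetric]
    by (rule member_le_sum) (auto simp: N_def)
  also have "\<dots> = coeff_sq_sum N (root_poly X)"
    using coeff_sq_sum_root_poly_eq[of 1 X N] by (simp add: N_def)
  also have "\<dots> \<le> (\<Sum>k<N. norm (coeff (root_poly X) k))\<^sup>2"
    unfolding coeff_sq_sum_def by (rule sum_squares_le_square_sum) simp_all
  also have "(\<Sum>k<N. norm (coeff (root_poly X) k)) = (\<Sum>k\<le>size X. norm (coeff (root_poly X) k))"
    using coeff_eq_0[of "root_poly X" "Suc (size X)"]
    by (simp add: N_def degree_root_poly lessThan_Suc_atMost)
  finally show ?thesis
    by (rule power2_le_imp_le) (simp add: sum_nonneg)
qed

lemma sum_exp_series_le_exp:
  fixes x :: real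
  assumes "0 \<le> x"
  shows "(\<Sum>j\<le>n. x ^ j / fact j) \<le> exp x"
proof -
  have sums: "(\<lambda>j. x ^ j / fact j) sums exp x"
    using exp_converges[of x] by (simp add: divide_inverse mult.commute)
  show ?thesis
    using sum_le_suminf[OF sums_summable[OF sums], of "{..n}"] sums_unique[OF sums] assms by simp
qed

lemma power_card_large_le_prod_max:
  fixes X :: "complex multiset" and t :: real
  assumes "t \<ge> 1"
  shows "t ^ size (filter_mset (\<lambda>x. t \<le> norm x) X) \<le> (\<Prod>x\<in>#X. max 1 (norm x))"
proof (induction X)
  case (add x X)
  have "0 \<le> t ^ size (filter_mset (\<lambda>x. t \<le> norm x) X)"
    using assms by simp
  then have "(if t \<le> norm x then t else 1) * t ^ size (filter_mset (\<lambda>x. t \<le> norm x) X)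
      \<le> max 1 (norm x) * (\<Prod>x\<in>#X. max 1 (norm x))"
    using add assms by (intro mult_mono) auto
  then show ?case
    by (simp split: if_splits)
qed simp
lemma card_large_roots_le:
  fixes Y :: "complex multiset" and g t :: real
  assumes t: "t > 0" and g: "g \<ge> 0"
    and coeff_bound: "\<And>k. k \<le> size Y \<Longrightarrow>
       norm (coeff (root_poly Y) k) \<le> (g * size Y) ^ (size Y - k) / fact (size Y - k)"
  shows "real (size (filter_mset (\<lambda>y. t \<le> norm y) Y)) \<le> exp 1 * g * size Y / t"
proof -
  define n where "n = size Y"
  define s where "s = t / exp 1"
  define Z where "Z = image_mset (\<lambda>y. y / complex_of_real s) Y"
  define m where "m = size (filter_mset (\<lambda>y. t \<le> norm y) Y)"
  have s: "s > 0" and t_eq: "t = exp 1 * s"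
    using t by (simp_all add: s_def)
  have size_Z: "size Z = n"
    by (simp add: Z_def n_def)
  have coeff_Z: "norm (coeff (root_poly Z) k) \<le> (g * n / s) ^ (n - k) / fact (n - k)" if k: "k \<le> n" for k
  proof -
    have "coeff (root_poly Y) k = complex_of_real s ^ n * ((1 / complex_of_real s) ^ k * coeff (root_poly Z) k)"
      using root_poly_scale[of "complex_of_real s" Y] s unfolding Z_def[symmetric] n_def
      by (simp add: coeff_pcompose_linear)
    then have "norm (coeff (root_poly Y) k) = s ^ n / s ^ k * norm (coeff (root_poly Z) k)"
      using s by (simp add: norm_mult norm_power norm_divide power_one_over)
    also have "s ^ n / s ^ k = s ^ (n - k)"
      using s k by (simp add: power_diff)
    finally have "norm (coeff (root_poly Z) k) = norm (coeff (root_poly Y) k) / s ^ (n - k)"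
      using s by (simp add: field_simps)
    also have "\<dots> \<le> ((g * n) ^ (n - k) / fact (n - k)) / s ^ (n - k)"
      using coeff_bound[of k] k s unfolding n_def by (intro divide_right_mono) auto
    also have "\<dots> = (g * n / s) ^ (n - k) / fact (n - k)"
      by (simp add: power_divide field_simps)
    finally show ?thesis .
  qed
  have "filter_mset (\<lambda>z. exp 1 \<le> norm z) Z
      = image_mset (\<lambda>y. y / complex_of_real s) (filter_mset (\<lambda>y. t \<le> norm y) Y)"
    unfolding Z_def t_eq using s
    by (simp add: image_mset_filter_mset_swap[symmetric] norm_divide o_def pos_le_divide_eq)
  then have "exp (real m) = exp 1 ^ size (filter_mset (\<lambda>z. exp 1 \<le> norm z) Z)"
    by (simp add: m_def exp_of_nat_mult[symmetric])
  also have "\<dots> \<le> (\<Prod>z\<in>#Z. max 1 (norm z))"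
    by (rule power_card_large_le_prod_max) simp
  also have "\<dots> \<le> (\<Sum>k\<le>n. norm (coeff (root_poly Z) k))"
    using landau_inequality[of Z] size_Z by simp
  also have "\<dots> \<le> (\<Sum>k\<le>n. (g * n / s) ^ (n - k) / fact (n - k))"
    by (rule sum_mono) (rule coeff_Z, simp)
  also have "\<dots> = (\<Sum>j\<le>n. (g * n / s) ^ j / fact j)"
    by (rule sum.reindex_bij_witness[of _ "\<lambda>j. n - j" "\<lambda>j. n - j"]) auto
  also have "\<dots> \<le> exp (g * n / s)"
    by (rule sum_exp_series_le_exp) (use s g in simp)
  finally have "real m \<le> g * n / s"
    by simp
  then show ?thesis
    by (simp add: m_def n_def s_def mult_ac)
qed

section \<open>Coefficient bounds from three-term recurrences\<close>

text \<open>The maximum \<open>T\<close> of \<open>\<parallel>a\<^sub>k\<parallel> / W\<^sub>k\<close> over \<open>k \<le> n\<close> is attained somewhere; if attainment at any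
  \<open>j \<noteq> i\<close> forces \<open>T = 0\<close>, then it is attained at \<open>i\<close>.\<close>
lemma weighted_max_principle:
  fixes a :: "nat \<Rightarrow> 'a :: real_normed_vector" and W :: "nat \<Rightarrow> real"
  assumes W: "\<And>k. W k > 0" and zero: "\<And>k. n < k \<Longrightarrow> a k = 0"
    and improve: "\<And>T j. 0 \<le> T \<Longrightarrow> j \<le> n \<Longrightarrow> j \<noteq> i \<Longrightarrow> (\<And>k. norm (a k) \<le> T * W k)
                    \<Longrightarrow> norm (a j) = T * W j \<Longrightarrow> T = 0"
  shows "norm (a k) \<le> norm (a i) / W i * W k"
proof -
  define r where "r k = norm (a k) / W k" for k
  have "Max (r ` {..n}) \<in> r ` {..n}"
    by (rule Max_in) auto
  then obtain j where j: "j \<le> n" "r j = Max (r ` {..n})"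
    by (metis atMost_iff imageE)
  have T: "0 \<le> r j"
    using W[of j] by (simp add: r_def)
  have bound: "norm (a k) \<le> r j * W k" for k
  proof (cases "k \<le> n")
    case True
    then have "r k \<le> r j" by (simp add: j(2))
    with W[of k] show ?thesis by (simp add: r_def pos_divide_le_eq)
  qed (use zero T W in \<open>simp add: less_imp_le\<close>)
  have attained: "norm (a j) = r j * W j"
    using W[of j] by (simp add: r_def)
  show ?thesis
  proof (cases "j = i")
    case True
    with bound show ?thesis by (simp add: r_def)
  next
    case False
    with improve[OF T j(1) False bound attained] have "norm (a k) \<le> 0"
      using bound[of k] by simp
    with W[of i] W[of k] show ?thesis by simp
  qed
qed

lemma power_over_fact_Suc:
  fixes x :: real
  shows "x ^ Suc k / fact (Suc k) * of_nat (Suc k) = x ^ k / fact k * x"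
proof -
  have "fact (Suc k) = (of_nat (Suc k) :: real) * fact k"
    by (rule fact_Suc)
  then show ?thesis
    by (simp add: mult.commute)
qed

lemma norm_of_nat_diff:
  assumes "j \<le> n"
  shows "norm (of_nat n - of_nat j :: complex) = real n - real j"
  using assms by (metis norm_of_nat of_nat_diff)

lemma norm_of_nat_add_le:
  assumes "j < n"
  shows "norm (of_nat n + of_nat j + A + 1 :: complex) \<le> 2 * real n + norm A"
proof -
  have "norm (of_nat n + of_nat j + A + 1 :: complex) \<le> norm (of_nat (n + j + 1) :: complex) + norm A"
    using norm_triangle_ineq[of "of_nat (n + j + 1) :: complex" A] by (simp add: algebra_simps)
  then show ?thesis
    using assms by (simp only: norm_of_nat)
qed

lemma shift_recurrence_norm_estimate:
  fixes b0 b1 b2 c A :: complex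
  assumes rec: "(1 - c ^ 2) * of_nat (j + 1) * of_nat (j + 2) * b2 - 2 * c * of_nat j * of_nat (j + 1) * b1
                + (of_nat n - of_nat j) * (of_nat n + of_nat j + A + 1) * b0 = 0"
    and j: "j < n"
  shows "(real n - real j) * (norm A - 2 * real n) * norm b0
       \<le> norm (1 - c ^ 2) * ((real j + 1) * (real j + 2)) * norm b2
         + 2 * norm c * (real j * (real j + 1)) * norm b1"
proof -
  have "norm A \<le> norm (of_nat n + of_nat j + A + 1) + norm (of_nat (n + j + 1) :: complex)"
    using norm_triangle_ineq4[of "of_nat n + of_nat j + A + 1" "of_nat (n + j + 1)"]
    by (simp add: algebra_simps)
  then have "norm A - 2 * real n \<le> norm (of_nat n + of_nat j + A + 1)"
    using j by (simp only: norm_of_nat)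
  then have "(real n - real j) * (norm A - 2 * real n) * norm b0
      \<le> norm ((of_nat n - of_nat j) * (of_nat n + of_nat j + A + 1) * b0)"
    using j by (simp add: norm_mult norm_of_nat_diff mult_left_mono mult_right_mono)
  also have "(of_nat n - of_nat j) * (of_nat n + of_nat j + A + 1) * b0
      = - ((1 - c ^ 2) * of_nat (j + 1) * of_nat (j + 2) * b2) + 2 * c * of_nat j * of_nat (j + 1) * b1"
    using rec by (simp add: algebra_simps)
  also have "norm \<dots> \<le> norm ((1 - c ^ 2) * of_nat (j + 1) * of_nat (j + 2) * b2)
                        + norm (2 * c * of_nat j * of_nat (j + 1) * b1)"
    by (metis norm_minus_cancel norm_triangle_ineq)
  also have "\<dots> = norm (1 - c ^ 2) * ((real j + 1) * (real j + 2)) * norm b2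
                  + 2 * norm c * (real j * (real j + 1)) * norm b1"
    by (simp only: norm_mult norm_of_nat norm_numeral) (simp add: algebra_simps)
  finally show ?thesis .
qed

lemma recurrence_norm_estimate:
  fixes a0 a1 a2 B A :: complex
  assumes rec: "of_nat (m + 1) * of_nat (m + 2) * a2 + B * of_nat (m + 1) * a1
                + (of_nat n - of_nat m) * (of_nat n + of_nat m + A + 1) * a0 = 0"
    and m: "m < n"
  shows "norm B * (real m + 1) * norm a1
       \<le> (real m + 1) * (real m + 2) * norm a2 + real n * (2 * real n + norm A) * norm a0"
proof -
  have "norm B * (real m + 1) * norm a1 = norm (B * of_nat (m + 1) * a1)"
    by (simp only: norm_mult norm_of_nat) simp
  also have "B * of_nat (m + 1) * a1
      = - (of_nat (m + 1) * of_nat (m + 2) * a2) - (of_nat n - of_nat m) * (of_nat n + of_nat m + A + 1) * a0"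
    using rec by (simp add: algebra_simps)
  also have "norm \<dots> \<le> norm (of_nat (m + 1) * of_nat (m + 2) * a2)
                        + norm ((of_nat n - of_nat m) * (of_nat n + of_nat m + A + 1) * a0)"
    using norm_triangle_ineq4[of "- (of_nat (m + 1) * of_nat (m + 2) * a2)"] by simp
  also have "\<dots> \<le> (real m + 1) * (real m + 2) * norm a2 + real n * (2 * real n + norm A) * norm a0"
  proof -
    have "(real n - real m) * norm (of_nat n + of_nat m + A + 1 :: complex)
        \<le> real n * (2 * real n + norm A)"
      using norm_of_nat_add_le[of m n A] m by (intro mult_mono) auto
    then have "(real n - real m) * norm (of_nat n + of_nat m + A + 1 :: complex) * norm a0
        \<le> real n * (2 * real n + norm A) * norm a0"
      by (rule mult_right_mono) simp
    moreover have "norm (of_nat (m + 1) * of_nat (m + 2) * a2) = (real m + 1) * (real m + 2) * norm a2"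
      unfolding norm_mult by (simp only: norm_of_nat) (simp add: add.commute)
    moreover have "norm ((of_nat n - of_nat m) * (of_nat n + of_nat m + A + 1) * a0)
        = (real n - real m) * norm (of_nat n + of_nat m + A + 1 :: complex) * norm a0"
      using m by (simp add: norm_mult norm_of_nat_diff)
    ultimately show ?thesis
      by linarith
  qed
  finally show ?thesis .
qed

lemma shift_recurrence_coeff_bound:
  fixes b :: "nat \<Rightarrow> complex" and c A :: complex and g :: real
  assumes rec: "\<And>k. k < n \<Longrightarrow> (1 - c ^ 2) * of_nat (k + 1) * of_nat (k + 2) * b (k + 2)
      - 2 * c * of_nat k * of_nat (k + 1) * b (k + 1) + (of_nat n - of_nat k) * (of_nat n + of_nat k + A + 1) * b k = 0"
    and zero: "\<And>k. n < k \<Longrightarrow> b k = 0" and g: "g > 0" and n: "n \<ge> 1"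
    and big: "norm A > 2 * n + 2 * norm (1 - c ^ 2) * n / g ^ 2 + 2 * norm c * n / g"
  shows "norm (b k) \<le> norm (b n) * ((g * n) ^ (n - k) / fact (n - k))"
proof -
  define W where "W k = (g * n) ^ (n - k) / fact (n - k)" for k
  have W_pos: "W k > 0" for k
    using g n by (simp add: W_def)
  have W_Suc: "W (Suc k) * (g * n) = W k * (real n - real k)" if "k < n" for k
  proof -
    have "n - k = Suc (n - Suc k)" using that by arith
    then show ?thesis
      unfolding W_def using power_over_fact_Suc[of "g * n" "n - Suc k"] that
      by (simp add: of_nat_diff)
  qed
  have improve: "T = 0" if T: "0 \<le> T" and j: "j \<le> n" "j \<noteq> n" and bound: "\<And>k. norm (b k) \<le> T * W k"
    and attained: "norm (b j) = T * W j" for T j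
  proof -
    have jn: "j < n" using j by simp
    define P where "P = T * W j * (real n - real j)"
    have P: "0 \<le> P" using T W_pos[of j] jn by (simp add: P_def)
    have b1: "norm (b (j + 1)) * (g * n) \<le> P"
      using mult_right_mono[OF bound[of "j + 1"], of "g * n"] g W_Suc[OF jn]
      by (simp add: P_def mult.assoc)
    have b2: "norm (b (j + 2)) * g ^ 2 * n \<le> P"
    proof (cases "j + 1 < n")
      case True
      have "norm (b (j + 2)) * (g * n) ^ 2 \<le> T * (W (Suc (Suc j)) * (g * n)) * (g * n)"
        using mult_right_mono[OF bound[of "j + 2"], of "(g * n) ^ 2"] g
        by (simp add: power2_eq_square mult.assoc)
      also have "W (Suc (Suc j)) * (g * n) = W (Suc j) * (real n - real j - 1)"
        using W_Suc[OF True] by simp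
      also have "T * (W (Suc j) * (real n - real j - 1)) * (g * n)
          = T * (W (Suc j) * (g * n)) * (real n - real j - 1)"
        by (simp only: mult_ac)
      also have "\<dots> = P * (real n - real j - 1)"
        unfolding W_Suc[OF jn] P_def by (simp only: mult.assoc)
      also have "\<dots> \<le> P * n"
        using P by (intro mult_left_mono) auto
      finally show ?thesis
        using g n by (simp add: power2_eq_square field_simps)
    qed (use zero P in simp)
    have q1: "(real j + 1) * (real j + 2) * norm (b (j + 2)) \<le> 2 * n / g ^ 2 * P"
    proof -
      have "(real j + 1) * (real j + 2) \<le> real n * (2 * real n)"
        using jn by (intro mult_mono) auto
      then have "(real j + 1) * (real j + 2) * norm (b (j + 2)) \<le> real n * (2 * real n) * norm (b (j + 2))"
        by (rule mult_right_mono) simp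
      also have "\<dots> = 2 * n * (n * norm (b (j + 2)))"
        by (simp add: algebra_simps)
      also have "n * norm (b (j + 2)) \<le> P / g ^ 2"
        using b2 g by (simp add: field_simps)
      finally show ?thesis
        using n by (simp add: field_simps mult_left_mono)
    qed
    have q2: "real j * (real j + 1) * norm (b (j + 1)) \<le> n / g * P"
    proof -
      have "real j * (real j + 1) \<le> real n * real n"
        using jn by (intro mult_mono) auto
      then have "real j * (real j + 1) * norm (b (j + 1)) \<le> real n * real n * norm (b (j + 1))"
        by (rule mult_right_mono) simp
      also have "\<dots> = n * (n * norm (b (j + 1)))"
        by (simp add: algebra_simps)
      also have "n * norm (b (j + 1)) \<le> P / g"
        using b1 g by (simp add: field_simps)
      finally show ?thesis
        using n by (simp add: field_simps mult_left_mono)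
    qed
    define R where "R = 2 * norm (1 - c ^ 2) * n / g ^ 2 + 2 * norm c * n / g"
    have "(norm A - 2 * real n) * P \<le> R * P"
    proof -
      have "(norm A - 2 * real n) * P = (real n - real j) * (norm A - 2 * real n) * norm (b j)"
        by (simp add: P_def attained algebra_simps)
      also have "\<dots> \<le> norm (1 - c ^ 2) * ((real j + 1) * (real j + 2) * norm (b (j + 2)))
                      + 2 * norm c * (real j * (real j + 1) * norm (b (j + 1)))"
        using shift_recurrence_norm_estimate[OF rec[OF jn] jn] by (simp add: mult.assoc)
      also have "\<dots> \<le> norm (1 - c ^ 2) * (2 * n / g ^ 2 * P) + 2 * norm c * (n / g * P)"
        using q1 q2 by (intro add_mono mult_left_mono) auto
      finally show ?thesis
        by (simp add: R_def algebra_simps)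
    qed
    then have "(norm A - 2 * real n - R) * P \<le> 0"
      by (simp add: algebra_simps)
    moreover have "norm A - 2 * real n - R > 0"
      using big by (simp add: R_def)
    ultimately have "P = 0"
      using P by (simp add: mult_le_0_iff)
    then show ?thesis
      using jn W_pos[of j] T by (simp add: P_def)
  qed
  from weighted_max_principle[where a = b and W = W and i = n and k = k, OF W_pos zero improve]
  show ?thesis
    by (simp add: W_def)
qed

lemma recurrence_coeff_bound:
  fixes a :: "nat \<Rightarrow> complex" and B A :: complex and g :: real
  assumes rec: "\<And>k. k < n \<Longrightarrow> of_nat (k + 1) * of_nat (k + 2) * a (k + 2) + B * of_nat (k + 1) * a (k + 1)
      + (of_nat n - of_nat k) * (of_nat n + of_nat k + A + 1) * a k = 0"
    and zero: "\<And>k. n < k \<Longrightarrow> a k = 0" and g: "g > 0" and n: "n \<ge> 1"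
    and big: "norm B > g * n + (2 * n + norm A) / g"
  shows "norm (a k) \<le> norm (a 0) * ((g * n) ^ k / fact k)"
proof -
  define W where "W k = (g * n) ^ k / fact k" for k
  have W_pos: "W k > 0" for k
    using g n by (simp add: W_def)
  have W_Suc: "W (Suc k) * (real k + 1) = W k * (g * n)" for k
    using power_over_fact_Suc[of "g * n" k] by (simp add: W_def add.commute)
  have improve: "T = 0" if T: "0 \<le> T" and j: "j \<le> n" "j \<noteq> 0" and bound: "\<And>k. norm (a k) \<le> T * W k"
    and attained: "norm (a j) = T * W j" for T j
  proof -
    obtain m where m: "j = Suc m" using j by (cases j) auto
    have mn: "m < n" using j m by simp
    define V where "V = T * W (Suc m)"
    have V: "0 \<le> V" using T W_pos[of "Suc m"] by (simp add: V_def)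
    have a2: "norm (a (m + 2)) * (real m + 2) \<le> V * (g * n)"
    proof -
      have "norm (a (m + 2)) * (real m + 2) \<le> T * W (m + 2) * (real m + 2)"
        by (rule mult_right_mono[OF bound]) simp
      also have "\<dots> = T * (W (Suc (Suc m)) * (real (Suc m) + 1))"
        by (simp add: algebra_simps)
      also have "\<dots> = V * (g * n)"
        unfolding W_Suc V_def by (simp only: mult.assoc)
      finally show ?thesis .
    qed
    have a0: "norm (a m) * (g * n) \<le> V * (real m + 1)"
      using mult_right_mono[OF bound[of m], of "g * n"] g W_Suc[of m]
      by (simp add: V_def mult.assoc)
    have "norm B * (real m + 1) * V
        \<le> (real m + 1) * (norm (a (m + 2)) * (real m + 2))
          + (2 * real n + norm A) / g * (norm (a m) * (g * n))"
    proof -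
      have "norm B * (real m + 1) * V = norm B * (real m + 1) * norm (a (m + 1))"
        using attained m by (simp add: V_def)
      also have "\<dots> \<le> (real m + 1) * (real m + 2) * norm (a (m + 2))
                      + real n * (2 * real n + norm A) * norm (a m)"
        using recurrence_norm_estimate[OF rec[OF mn] mn] .
      also have "\<dots> = (real m + 1) * (norm (a (m + 2)) * (real m + 2))
                      + (2 * real n + norm A) / g * (norm (a m) * (g * n))"
        using g by (simp add: field_simps)
      finally show ?thesis .
    qed
    also have "\<dots> \<le> (real m + 1) * (V * (g * n)) + (2 * real n + norm A) / g * (V * (real m + 1))"
      using a0 a2 g by (intro add_mono mult_left_mono) auto
    finally have "(norm B - (g * n + (2 * real n + norm A) / g)) * ((real m + 1) * V) \<le> 0"
      by (simp add: algebra_simps)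
    moreover have "norm B - (g * n + (2 * real n + norm A) / g) > 0"
      using big by simp
    ultimately have "V = 0"
      using V by (simp add: mult_le_0_iff)
    then show ?thesis
      using W_pos[of "Suc m"] by (simp add: V_def)
  qed
  from weighted_max_principle[where a = a and W = W and i = 0 and k = k, OF W_pos zero improve]
  show ?thesis
    by (simp add: W_def)
qed

section \<open>Root counts for Jacobi polynomials\<close>

lemma jacobi_card_roots_far_from_center:
  fixes n :: nat and a b c :: complex and g \<rho> :: real
  assumes deg: "degree (jacobi n a b) = n" and n: "n \<ge> 1" and center: "b - a = (a + b + 2) * c"
    and g: "g > 0" and \<rho>: "\<rho> > 0"
    and big: "norm (a + b) > 2 * n + 2 * norm (1 - c ^ 2) * n / g ^ 2 + 2 * norm c * n / g"
  shows "real (size (filter_mset (\<lambda>x. \<rho> \<le> norm (x - c)) (proots (jacobi n a b)))) \<le> exp 1 * g * n / \<rho>"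
proof -
  define p where "p = jacobi n a b"
  define L where "L = lead_coeff p"
  define Y where "Y = image_mset (\<lambda>x. x - c) (proots p)"
  define Q where "Q = pcompose p [:c, 1:]"
  have "p \<noteq> 0" using deg n by (auto simp: p_def)
  then have L: "L \<noteq> 0"
    by (simp add: L_def)
  have size_Y: "size Y = n"
    using deg by (simp add: Y_def p_def size_proots_complex)
  have Q: "Q = smult L (root_poly Y)"
    using root_poly_proots[OF \<open>p \<noteq> 0\<close>] unfolding Q_def L_def Y_def
    by (metis pcompose_smult root_poly_shift)
  have top: "coeff Q n = L"
    using coeff_root_poly_size[of Y] size_Y by (simp add: Q)
  have zero: "coeff Q k = 0" if "n < k" for k
    using that degree_root_poly[of Y] size_Y by (simp add: Q coeff_eq_0)
  have rec: "(1 - c ^ 2) * of_nat (k + 1) * of_nat (k + 2) * coeff Q (k + 2)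
      - 2 * c * of_nat k * of_nat (k + 1) * coeff Q (k + 1)
      + (of_nat n - of_nat k) * (of_nat n + of_nat k + (a + b) + 1) * coeff Q k = 0" for k
    using jacobi_shift_coeff_recurrence[where n = n and k = k and a = a and b = b and c = c] center by (simp add: Q_def p_def)
  have bound: "norm (coeff Q k) \<le> norm L * ((g * n) ^ (n - k) / fact (n - k))" for k
    using shift_recurrence_coeff_bound[of n c "coeff Q" "a + b" g k] rec zero g n big top
    by (simp add: add.assoc)
  have "norm (coeff (root_poly Y) k) \<le> (g * size Y) ^ (size Y - k) / fact (size Y - k)" for k
  proof -
    have "norm L * norm (coeff (root_poly Y) k) \<le> norm L * ((g * n) ^ (n - k) / fact (n - k))"
      using bound[of k] by (simp add: Q norm_mult)
    from mult_left_le_imp_le[OF this] L size_Y show ?thesis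
      by simp
  qed
  from card_large_roots_le[OF \<rho> less_imp_le[OF g] this]
  show ?thesis
    using size_Y by (simp add: Y_def p_def size_filter_image_mset)
qed

lemma jacobi_card_roots_near_zero:
  fixes n :: nat and a b :: complex and g \<rho> :: real
  assumes deg: "degree (jacobi n a b) = n" and n: "n \<ge> 1"
    and g: "g > 0" and \<rho>: "\<rho> > 0"
    and big: "norm (b - a) > g * n + (2 * n + norm (a + b)) / g"
  shows "real (size (filter_mset (\<lambda>x. norm x \<le> \<rho>) (proots (jacobi n a b)))) \<le> exp 1 * g * n * \<rho>"
proof -
  define p where "p = jacobi n a b"
  define X where "X = proots p"
  define L where "L = lead_coeff p"
  define Y where "Y = image_mset inverse X"
  have "p \<noteq> 0" using deg n by (auto simp: p_def)
  then have L: "L \<noteq> 0"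
    by (simp add: L_def)
  have size_X: "size X = n" and size_Y: "size Y = n"
    using deg by (simp_all add: X_def Y_def p_def size_proots_complex)
  have p: "p = smult L (root_poly X)"
    unfolding L_def X_def by (rule root_poly_proots[OF \<open>p \<noteq> 0\<close>])
  have top: "coeff p n \<noteq> 0"
    using deg L by (simp add: L_def p_def)
  have rec: "of_nat (k + 1) * of_nat (k + 2) * coeff p (k + 2) + (b - a) * of_nat (k + 1) * coeff p (k + 1)
      + (of_nat n - of_nat k) * (of_nat n + of_nat k + (a + b) + 1) * coeff p k = 0" for k
    using jacobi_shift_coeff_recurrence[where n = n and k = k and a = a and b = b and c = 0] by (simp add: p_def)
  have bound: "norm (coeff p k) \<le> norm (coeff p 0) * ((g * n) ^ k / fact k)" for k
    using recurrence_coeff_bound[of n "coeff p" "b - a" "a + b" g k] rec g n big deg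
    by (simp add: p_def coeff_eq_0 add.assoc)
  have "coeff p 0 \<noteq> 0"
    using bound[of n] top by auto
  then have X0: "0 \<notin># X"
    using \<open>p \<noteq> 0\<close> by (auto simp: X_def poly_0_coeff_0)
  have "norm (coeff (root_poly Y) k) \<le> (g * size Y) ^ (size Y - k) / fact (size Y - k)"
    if "k \<le> size Y" for k
  proof -
    have "coeff (root_poly Y) k = coeff p (n - k) / coeff p 0"
      using coeff_root_poly_inverse[OF X0, of k] that size_X size_Y L
      unfolding Y_def by (simp add: p)
    then show ?thesis
      using bound[of "n - k"] \<open>coeff p 0 \<noteq> 0\<close> size_Y
      by (simp add: norm_divide divide_le_eq mult.commute)
  qed
  from card_large_roots_le[of "1 / \<rho>", OF _ less_imp_le[OF g] this]
  have "real (size (filter_mset (\<lambda>y. 1 / \<rho> \<le> norm y) Y)) \<le> exp 1 * g * n * \<rho>"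
    using \<rho> size_Y by simp
  moreover have "size (filter_mset (\<lambda>x. norm x \<le> \<rho>) X) \<le> size (filter_mset (\<lambda>y. 1 / \<rho> \<le> norm y) Y)"
    unfolding Y_def size_filter_image_mset
  proof (intro size_mset_mono filter_mset_mono_strong)
    fix x assume x: "x \<in># X" "norm x \<le> \<rho>"
    with X0 have "x \<noteq> 0" by auto
    with x(2) \<rho> have "1 / \<rho> \<le> 1 / norm x"
      by (simp add: frac_le)
    then show "1 / \<rho> \<le> norm (inverse x)"
      by (simp add: norm_inverse divide_inverse)
  qed simp
  ultimately show ?thesis
    by (simp add: X_def p_def)
qed

section \<open>Weak convergence of root-counting measures\<close>

lemma sum_mset_image_eq_sum_count:
  fixes f :: "'a \<Rightarrow> real"
  shows "sum_mset (image_mset f M) = (\<Sum>x\<in>set_mset M. of_nat (count M x) * f x)"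
proof (induction M)
  case (add x M)
  show ?case
  proof (cases "x \<in># M")
    case True
    have "(\<Sum>y\<in>set_mset (add_mset x M). of_nat (count (add_mset x M) y) * f y)
        = (\<Sum>y\<in>set_mset M. of_nat (count M y) * f y + (if y = x then f y else 0))"
      using True by (intro sum.cong) (auto simp: insert_absorb algebra_simps)
    also have "\<dots> = (\<Sum>y\<in>set_mset M. of_nat (count M y) * f y) + f x"
      using True by (simp add: sum.distrib)
    finally show ?thesis
      using add by simp
  next
    case False
    then have "(\<Sum>y\<in>set_mset M. of_nat (count (add_mset x M) y) * f y)
        = (\<Sum>y\<in>set_mset M. of_nat (count M y) * f y)"
      by (intro sum.cong) auto
    with False show ?thesis
      using add by (simp add: count_eq_zero_iff)
  qed
qed simp

lemma root_integral_proots: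
  "(p :: complex poly) \<noteq> 0 \<Longrightarrow> root_integral p f = sum_mset (image_mset f (proots p)) / degree p"
  unfolding root_integral_def sum_mset_image_eq_sum_count by simp

lemma root_integral_const:
  assumes "degree (p :: complex poly) \<ge> 1"
  shows "root_integral p (\<lambda>_. c) = c"
proof -
  have "p \<noteq> 0" using assms by auto
  with assms show ?thesis
    by (simp add: root_integral_proots size_proots_complex)
qed

lemma root_integral_le_card:
  fixes p :: "complex poly"
  assumes "degree p \<ge> 1" and "\<And>x. f x \<le> (if P x then 1 else 0)"
  shows "root_integral p f \<le> size (filter_mset P (proots p)) / degree p"
proof -
  have indicator_sum: "sum_mset (image_mset (\<lambda>x. if P x then 1 else 0) X) = real (size (filter_mset P X))"
    for X :: "complex multiset"
    by (induction X) auto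
  have "sum_mset (image_mset f (proots p)) \<le> sum_mset (image_mset (\<lambda>x. if P x then 1 else 0) (proots p))"
    using assms(2) by (rule sum_mset_mono)
  also have "\<dots> = size (filter_mset P (proots p))"
    by (rule indicator_sum)
  moreover have "p \<noteq> 0"
    using assms(1) by auto
  ultimately show ?thesis
    by (simp add: root_integral_proots divide_right_mono)
qed

lemma abs_root_integral_diff_le:
  fixes p :: "complex poly"
  assumes "degree p \<ge> 1" and "\<And>x. \<bar>f x - y\<bar> \<le> \<eta> + (if P x then D else 0)"
  shows "\<bar>root_integral p f - y\<bar> \<le> \<eta> + D * size (filter_mset P (proots p)) / degree p"
proof -
  define X where "X = proots p"
  have p: "p \<noteq> 0" and size_X: "size X = degree p"
    using assms(1) by (auto simp: X_def size_proots_complex)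
  have "sum_mset (image_mset (\<lambda>x. f x - y) X) = sum_mset (image_mset f X) - size X * y"
    by (induction X) (auto simp: algebra_simps)
  then have "root_integral p f - y = sum_mset (image_mset (\<lambda>x. f x - y) X) / degree p"
    using assms(1) p size_X by (simp add: root_integral_proots X_def field_simps)
  then have "\<bar>root_integral p f - y\<bar> = \<bar>sum_mset (image_mset (\<lambda>x. f x - y) X)\<bar> / degree p"
    by simp
  also have "\<bar>sum_mset (image_mset (\<lambda>x. f x - y) X)\<bar> \<le> sum_mset (image_mset (\<lambda>x. \<bar>f x - y\<bar>) X)"
    by (induction X) (auto intro: order_trans[OF abs_triangle_ineq])
  also have "\<dots> \<le> sum_mset (image_mset (\<lambda>x. \<eta> + (if P x then D else 0)) X)"
    using assms(2) by (rule sum_mset_mono)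
  also have "\<dots> = \<eta> * size X + D * size (filter_mset P X)"
    by (induction X) (auto simp: algebra_simps)
  finally show ?thesis
    using assms(1) size_X by (simp add: X_def divide_right_mono add_divide_distrib)
qed

lemma roots_weak_conv_return:
  fixes q :: "nat \<Rightarrow> complex poly" and c :: "nat \<Rightarrow> complex"
  assumes deg: "eventually (\<lambda>m. degree (q m) \<ge> 1) sequentially"
    and c: "c \<longlonglongrightarrow> \<kappa>"
    and far: "\<And>\<rho> \<epsilon> :: real. \<rho> > 0 \<Longrightarrow> \<epsilon> > 0 \<Longrightarrow> eventually (\<lambda>m.
       real (size (filter_mset (\<lambda>x. \<rho> \<le> norm (x - c m)) (proots (q m)))) \<le> \<epsilon> * real (degree (q m)))
       sequentially"
  shows "roots_weak_conv q (return borel \<kappa>)"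
  unfolding roots_weak_conv_def
proof (intro allI impI)
  fix f :: "complex \<Rightarrow> real"
  assume f: "continuous_on UNIV f \<and> bounded (range f)"
  obtain M where M: "\<And>x. \<bar>f x\<bar> \<le> M"
    using f unfolding bounded_iff by auto
  have "(\<lambda>m. root_integral (q m) f) \<longlonglongrightarrow> f \<kappa>"
  proof (rule tendstoI)
    fix e :: real assume e: "e > 0"
    obtain \<delta> where \<delta>: "\<delta> > 0" "\<And>x. dist x \<kappa> < \<delta> \<Longrightarrow> dist (f x) (f \<kappa>) < e / 2"
      using f e unfolding continuous_on_eq_continuous_at[OF open_UNIV] continuous_at_eps_delta
      by (metis UNIV_I half_gt_zero)
    define \<epsilon> where "\<epsilon> = e / (4 * (M + 1))"
    have M0: "M \<ge> 0" using M[of 0] by simp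
    then have \<epsilon>: "\<epsilon> > 0" and "2 * M * \<epsilon> < e / 2"
      using e by (simp_all add: \<epsilon>_def field_simps)
    have "eventually (\<lambda>m. dist (c m) \<kappa> < \<delta> / 2) sequentially"
      using tendstoD[OF c, of "\<delta> / 2"] \<delta>(1) by simp
    moreover have "eventually (\<lambda>m. real (size (filter_mset (\<lambda>x. \<delta> / 2 \<le> norm (x - c m)) (proots (q m))))
        \<le> \<epsilon> * real (degree (q m))) sequentially"
      using far[of "\<delta> / 2" \<epsilon>] \<delta>(1) \<epsilon> by simp
    ultimately show "eventually (\<lambda>m. dist (root_integral (q m) f) (f \<kappa>) < e) sequentially"
      using deg
    proof eventually_elim
      case (elim m)
      have "\<bar>f x - f \<kappa>\<bar> \<le> e / 2 + (if \<delta> / 2 \<le> norm (x - c m) then 2 * M else 0)" for x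
      proof (cases "\<delta> / 2 \<le> norm (x - c m)")
        case True
        then show ?thesis using M[of x] M[of \<kappa>] e by simp
      next
        case False
        have "dist x \<kappa> \<le> dist x (c m) + dist (c m) \<kappa>"
          by (rule dist_triangle)
        also have "\<dots> < \<delta>"
          using False elim(1) by (simp add: dist_norm)
        finally show ?thesis
          using \<delta>(2) False by (fastforce simp: dist_real_def)
      qed
      from abs_root_integral_diff_le[OF elim(3) this]
      have "\<bar>root_integral (q m) f - f \<kappa>\<bar>
          \<le> e / 2 + 2 * M * size (filter_mset (\<lambda>x. \<delta> / 2 \<le> norm (x - c m)) (proots (q m))) / degree (q m)" .
      also have "\<dots> \<le> e / 2 + 2 * M * \<epsilon>"
        using elim(2,3) M0 by (simp add: divide_le_eq mult_left_mono mult.assoc)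
      finally have "\<bar>root_integral (q m) f - f \<kappa>\<bar> \<le> e / 2 + 2 * M * \<epsilon>" .
      then show ?case
        using \<open>2 * M * \<epsilon> < e / 2\<close> by (simp add: dist_real_def)
    qed
  qed
  moreover have "integral\<^sup>L (return borel \<kappa>) f = f \<kappa>"
    using f by (intro integral_return) (auto intro: borel_measurable_continuous_onI)
  ultimately show "(\<lambda>m. root_integral (q m) f) \<longlonglongrightarrow> integral\<^sup>L (return borel \<kappa>) f"
    by simp
qed

lemma roots_weak_conv_total_mass:
  assumes "roots_weak_conv p \<mu>" and "eventually (\<lambda>n. degree (p n) \<ge> 1) sequentially"
  shows "integral\<^sup>L \<mu> (\<lambda>_. 1 :: real) = 1"
proof -
  have "continuous_on UNIV (\<lambda>_ :: complex. 1 :: real) \<and> bounded (range (\<lambda>_ :: complex. 1 :: real))"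
    by auto
  then have "(\<lambda>n. root_integral (p n) (\<lambda>_. 1)) \<longlonglongrightarrow> integral\<^sup>L \<mu> (\<lambda>_. 1 :: real)"
    using assms(1) unfolding roots_weak_conv_def by blast
  moreover have "(\<lambda>n. root_integral (p n) (\<lambda>_. 1)) \<longlonglongrightarrow> 1"
    using assms(2) by (rule tendsto_eventually[OF eventually_mono]) (simp add: root_integral_const)
  ultimately show ?thesis
    by (rule LIMSEQ_unique)
qed

lemma roots_weak_conv_tight:
  fixes p :: "nat \<Rightarrow> complex poly"
  assumes \<mu>: "compactly_supported \<mu>" and conv: "roots_weak_conv p \<mu>"
    and deg: "eventually (\<lambda>n. degree (p n) \<ge> 1) sequentially"
  obtains R where "R > 0" "eventually (\<lambda>n.
    real (degree (p n)) / 2 < real (size (filter_mset (\<lambda>x. norm x \<le> R) (proots (p n))))) sequentially"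
proof -
  obtain K where sets: "sets \<mu> = sets borel" and K: "compact K" and K0: "emeasure \<mu> (UNIV - K) = 0"
    using \<mu> unfolding compactly_supported_def by blast
  obtain R where R: "R > 0" "\<And>x. x \<in> K \<Longrightarrow> norm x \<le> R"
    using compact_imp_bounded[OF K] unfolding bounded_pos by auto
  define h where "h x = max 0 (min 1 (R + 1 - norm x))" for x :: complex
  have h: "continuous_on UNIV h \<and> bounded (range h)"
    unfolding h_def bounded_iff by (auto intro!: continuous_intros exI[of _ 1])
  have "AE x in \<mu>. h x = 1"
  proof (rule AE_I')
    show "UNIV - K \<in> null_sets \<mu>"
      using K0 sets compact_imp_closed[OF K] by (simp add: null_sets_def borel_closed)
  qed (use R in \<open>auto simp: h_def\<close>)
  then have "integral\<^sup>L \<mu> h = integral\<^sup>L \<mu> (\<lambda>_. 1)"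
    using h sets by (intro integral_cong_AE) (auto intro: borel_measurable_continuous_onI
        simp: measurable_cong_sets[OF sets refl])
  also have "\<dots> = 1"
    using conv deg by (rule roots_weak_conv_total_mass)
  finally have "(\<lambda>n. root_integral (p n) h) \<longlonglongrightarrow> 1"
    using conv h unfolding roots_weak_conv_def by metis
  then have "eventually (\<lambda>n. 1 / 2 < root_integral (p n) h) sequentially"
    by (rule order_tendstoD) simp
  then have "eventually (\<lambda>n.
      real (degree (p n)) / 2 < real (size (filter_mset (\<lambda>x. norm x \<le> R + 1) (proots (p n))))) sequentially"
    using deg
  proof eventually_elim
    case (elim n)
    have d: "real (degree (p n)) > 0"
      using elim(2) by simp
    have "root_integral (p n) h \<le> size (filter_mset (\<lambda>x. norm x \<le> R + 1) (proots (p n))) / degree (p n)"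
      using elim(2) by (rule root_integral_le_card) (simp add: h_def)
    then have "root_integral (p n) h * degree (p n) \<le> size (filter_mset (\<lambda>x. norm x \<le> R + 1) (proots (p n)))"
      using d by (simp add: le_divide_eq)
    moreover have "real (degree (p n)) / 2 < root_integral (p n) h * degree (p n)"
      using mult_strict_right_mono[OF elim(1) d] by simp
    ultimately show ?case
      by linarith
  qed
  with R(1) that[of "R + 1"] show ?thesis
    by simp
qed

lemma roots_weak_conv_subseq_unique:
  assumes "roots_weak_conv p \<mu>" and "strict_mono r" and "roots_weak_conv (\<lambda>m. p (r m)) \<nu>"
  shows "roots_weak_conv p \<nu>"
  unfolding roots_weak_conv_def
proof (intro allI impI)
  fix f :: "complex \<Rightarrow> real"
  assume f: "continuous_on UNIV f \<and> bounded (range f)"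
  then have lim: "(\<lambda>n. root_integral (p n) f) \<longlonglongrightarrow> integral\<^sup>L \<mu> f"
    using assms(1) unfolding roots_weak_conv_def by blast
  from LIMSEQ_subseq_LIMSEQ[OF this assms(2)]
  have "(\<lambda>m. root_integral (p (r m)) f) \<longlonglongrightarrow> integral\<^sup>L \<mu> f"
    by (simp add: o_def)
  moreover have "(\<lambda>m. root_integral (p (r m)) f) \<longlonglongrightarrow> integral\<^sup>L \<nu> f"
    using assms(3) f unfolding roots_weak_conv_def by blast
  ultimately have "integral\<^sup>L \<mu> f = integral\<^sup>L \<nu> f"
    by (rule LIMSEQ_unique)
  with lim show "(\<lambda>n. root_integral (p n) f) \<longlonglongrightarrow> integral\<^sup>L \<nu> f"
    by simp
qed

section \<open>Asymptotics of the parameters\<close>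

lemma unbounded_subseq:
  fixes f :: "nat \<Rightarrow> real"
  assumes "\<not> bdd_above (range f)"
  obtains r where "strict_mono r" "\<And>m. real m \<le> f (r m)"
proof -
  have large: "\<exists>n > N. K \<le> f n" for N K
  proof (rule ccontr)
    assume "\<not> (\<exists>n > N. K \<le> f n)"
    then have "f n \<le> max K (Max (f ` {..N}))" for n
      by (cases "n \<le> N") (auto simp: not_le le_max_iff_disj intro: Max_ge)
    with assms show False
      by (auto simp: bdd_above_def)
  qed
  have "\<exists>r. \<forall>m. real m \<le> f (r m) \<and> r m < r (Suc m)"
  proof (rule dependent_nat_choice)
    show "\<exists>n. real 0 \<le> f n"
      using large[of 0 0] by auto
    show "\<exists>n'. real (Suc m) \<le> f n' \<and> n < n'" for m n
      using large[of n "real (Suc m)"] by auto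
  qed
  then obtain r where r: "\<And>m. real m \<le> f (r m)" "\<And>m. r m < r (Suc m)"
    by blast
  have "strict_mono r"
    using r(2) by (simp add: strict_mono_Suc_iff)
  then show ?thesis
    using r(1) by (rule that)
qed

text \<open>Otherwise, along a subsequence almost all roots would escape to infinity, which weak
  convergence to a compactly supported measure forbids.\<close>
lemma jacobi_param_ratio_bdd_above:
  fixes \<alpha> \<beta> :: "nat \<Rightarrow> complex" and p :: "nat \<Rightarrow> complex poly"
  assumes p_def: "\<And>n. p n = jacobi n (\<alpha> n) (\<beta> n)" and deg: "\<And>n. degree (p n) = n"
    and \<mu>: "compactly_supported \<mu>" "roots_weak_conv p \<mu>"
  shows "bdd_above (range (\<lambda>n. norm (\<beta> n - \<alpha> n) / (2 * real n + norm (\<alpha> n + \<beta> n))))"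
    (is "bdd_above (range ?D)")
proof (rule ccontr)
  assume "\<not> bdd_above (range ?D)"
  then obtain r where r: "strict_mono r" and ratio: "\<And>m. real m \<le> ?D (r m)"
    by (rule unbounded_subseq[where f = ?D]) auto
  have "eventually (\<lambda>n. degree (p n) \<ge> 1) sequentially"
    using eventually_ge_at_top[of 1] by (simp add: deg)
  with \<mu> obtain R where R: "R > 0"
    and tight: "eventually (\<lambda>n. real (degree (p n)) / 2
                  < real (size (filter_mset (\<lambda>x. norm x \<le> R) (proots (p n))))) sequentially"
    by (rule roots_weak_conv_tight)
  define g where "g = 1 / (4 * exp 1 * R)"
  have g: "g > 0" using R by (simp add: g_def)
  have "eventually (\<lambda>m. g + 1 / g < real m) sequentially"
    using filterlim_real_sequentially unfolding filterlim_at_top_dense by blast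
  moreover have "eventually (\<lambda>m. 1 \<le> m) sequentially"
    by (rule eventually_ge_at_top)
  moreover note eventually_subseq[OF r tight]
  ultimately have "eventually (\<lambda>_. False) sequentially"
  proof eventually_elim
    case (elim m)
    define n where "n = r m"
    define A where "A = \<alpha> n + \<beta> n"
    have n: "n \<ge> 1"
      using elim seq_suble[OF r, of m] by (simp add: n_def)
    then have D: "2 * real n + norm A > 0"
      by (simp add: add_pos_nonneg)
    have "g * n + (2 * n + norm A) / g \<le> (g + 1 / g) * (2 * n + norm A)"
      using g by (simp add: field_simps)
    also have "\<dots> < real m * (2 * n + norm A)"
      using elim D by simp
    also have "\<dots> \<le> norm (\<beta> n - \<alpha> n)"
      using ratio[of m] D by (simp add: n_def A_def pos_le_divide_eq)
    finally have "real (size (filter_mset (\<lambda>x. norm x \<le> R) (proots (p n)))) \<le> exp 1 * g * n * R"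
      using jacobi_card_roots_near_zero[OF _ n g R] deg[of n] by (simp add: p_def A_def)
    also have "\<dots> = real n / 4"
      using R by (simp add: g_def)
    finally show ?case
      using elim(3) n by (simp add: n_def deg)
  qed
  then show False
    by simp
qed

lemma jacobi_center_tendsto:
  fixes a b :: "nat \<Rightarrow> complex"
  assumes A: "filterlim (\<lambda>m. norm (a m + b m)) at_top sequentially"
    and w: "(\<lambda>m. (b m - a m) / (a m + b m)) \<longlonglongrightarrow> \<kappa>"
  shows "(\<lambda>m. (b m - a m) / (a m + b m + 2)) \<longlonglongrightarrow> \<kappa>"
proof -
  have "filterlim (\<lambda>m. 2 + (a m + b m)) at_infinity sequentially"
    using A by (intro tendsto_add_filterlim_at_infinity[OF tendsto_const])
      (simp add: filterlim_at_infinity_conv_norm_at_top)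
  then have "(\<lambda>m. inverse (a m + b m + 2)) \<longlonglongrightarrow> 0"
    using filterlim_compose[OF tendsto_inverse_0] by (simp add: add.commute o_def)
  with w have "(\<lambda>m. (b m - a m) / (a m + b m) * (1 - 2 * inverse (a m + b m + 2))) \<longlonglongrightarrow> \<kappa> * (1 - 2 * 0)"
    by (intro tendsto_intros)
  moreover have "eventually (\<lambda>m. norm (a m + b m) > 2) sequentially"
    using A unfolding filterlim_at_top_dense by blast
  then have "eventually (\<lambda>m. (b m - a m) / (a m + b m) * (1 - 2 * inverse (a m + b m + 2))
                              = (b m - a m) / (a m + b m + 2)) sequentially"
  proof eventually_elim
    case (elim m)
    have nonzero: "a m + b m \<noteq> 0"
      using elim by auto
    have nonzero2: "a m + b m + 2 \<noteq> 0"
    proof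
      assume "a m + b m + 2 = 0"
      then have "a m + b m = - 2" by (simp add: eq_neg_iff_add_eq_0)
      with elim show False by simp
    qed
    have "1 - 2 * inverse (a m + b m + 2) = (a m + b m) / (a m + b m + 2)"
      using nonzero2 by (simp add: field_simps)
    with nonzero show ?case
      by simp
  qed
  ultimately show ?thesis
    by (simp add: tendsto_cong)
qed

lemma jacobi_roots_concentrate:
  fixes n :: "nat \<Rightarrow> nat" and a b :: "nat \<Rightarrow> complex"
  assumes deg: "\<And>m. degree (jacobi (n m) (a m) (b m)) = n m"
    and A: "filterlim (\<lambda>m. norm (a m + b m) / real (n m)) at_top sequentially"
    and w: "(\<lambda>m. (b m - a m) / (a m + b m)) \<longlonglongrightarrow> \<kappa>"
  shows "roots_weak_conv (\<lambda>m. jacobi (n m) (a m) (b m)) (return borel \<kappa>)"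
proof -
  define c where "c m = (b m - a m) / (a m + b m + 2)" for m
  have "eventually (\<lambda>m. 1 \<le> norm (a m + b m) / real (n m)) sequentially"
    using A unfolding filterlim_at_top by blast
  then have n: "eventually (\<lambda>m. n m \<ge> 1 \<and> norm (a m + b m) / real (n m) \<le> norm (a m + b m)) sequentially"
  proof (rule eventually_mono)
    fix m assume ratio: "1 \<le> norm (a m + b m) / real (n m)"
    then have "n m \<noteq> 0"
      by (cases "n m = 0") auto
    with ratio show "n m \<ge> 1 \<and> norm (a m + b m) / real (n m) \<le> norm (a m + b m)"
      by (simp add: divide_le_eq mult_le_cancel_left1)
  qed
  have "filterlim (\<lambda>m. norm (a m + b m)) at_top sequentially"
    using filterlim_at_top_mono[OF A eventually_mono[OF n]] by auto
  then have c: "c \<longlonglongrightarrow> \<kappa>"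
    unfolding c_def using w by (rule jacobi_center_tendsto)
  show ?thesis
  proof (rule roots_weak_conv_return[OF _ c])
    show "eventually (\<lambda>m. degree (jacobi (n m) (a m) (b m)) \<ge> 1) sequentially"
      using n by (rule eventually_mono) (simp add: deg)
  next
    fix \<rho> \<epsilon> :: real assume \<rho>: "\<rho> > 0" and \<epsilon>: "\<epsilon> > 0"
    define g where "g = \<epsilon> * \<rho> / exp 1"
    define M where "M = norm \<kappa> + 1"
    define Z where "Z = 3 + 2 * (1 + M ^ 2) / g ^ 2 + 2 * M / g"
    have g: "g > 0" using \<rho> \<epsilon> by (simp add: g_def)
    have "eventually (\<lambda>m. dist (c m) \<kappa> < 1) sequentially"
      using tendstoD[OF c] by simp
    then have "eventually (\<lambda>m. norm (c m) \<le> M) sequentially"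
    proof (rule eventually_mono)
      fix m assume "dist (c m) \<kappa> < 1"
      with norm_triangle_sub[of "c m" \<kappa>] show "norm (c m) \<le> M"
        by (simp add: M_def dist_norm)
    qed
    moreover have "eventually (\<lambda>m. Z \<le> norm (a m + b m) / real (n m)) sequentially"
      using A unfolding filterlim_at_top by blast
    ultimately show "eventually (\<lambda>m. real (size (filter_mset (\<lambda>x. \<rho> \<le> norm (x - c m))
        (proots (jacobi (n m) (a m) (b m))))) \<le> \<epsilon> * real (degree (jacobi (n m) (a m) (b m)))) sequentially"
      using n
    proof eventually_elim
      case (elim m)
      have n1: "n m \<ge> 1" and Zn: "Z * n m \<le> norm (a m + b m)"
        using elim by (auto simp: le_divide_eq)
      have "norm (1 - c m ^ 2) \<le> 1 + M ^ 2"
        using norm_triangle_ineq4[of 1 "c m ^ 2"] power_mono[OF elim(1) norm_ge_zero, of 2]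
        by (simp add: norm_power)
      then have "2 * n m + 2 * norm (1 - c m ^ 2) * n m / g ^ 2 + 2 * norm (c m) * n m / g
          \<le> 2 * n m + 2 * (1 + M ^ 2) * n m / g ^ 2 + 2 * M * n m / g"
        using elim(1) g by (intro add_mono divide_right_mono mult_right_mono) auto
      also have "\<dots> < Z * n m"
        using n1 by (simp add: Z_def algebra_simps)
      finally have big: "norm (a m + b m) > 2 * n m + 2 * norm (1 - c m ^ 2) * n m / g ^ 2 + 2 * norm (c m) * n m / g"
        using Zn by linarith
      have "0 \<le> 2 * norm (1 - c m ^ 2) * n m / g ^ 2 + 2 * norm (c m) * n m / g"
        using g by simp
      with big n1 have "norm (a m + b m) > 2"
        by linarith
      then have "a m + b m \<noteq> - 2"
        by auto
      then have "a m + b m + 2 \<noteq> 0"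
        by (simp add: eq_neg_iff_add_eq_0)
      then have center: "b m - a m = (a m + b m + 2) * c m"
        by (simp add: c_def)
      from jacobi_card_roots_far_from_center[OF deg n1 center g \<rho> big]
      show ?case
        using \<rho> by (simp add: deg g_def)
    qed
  qed
qed

lemma jacobi_subseq_concentrate:
  fixes \<alpha> \<beta> :: "nat \<Rightarrow> complex" and p :: "nat \<Rightarrow> complex poly"
  assumes p_def: "\<And>n. p n = jacobi n (\<alpha> n) (\<beta> n)" and deg: "\<And>n. degree (p n) = n"
    and unbounded: "\<not> bounded (range (\<lambda>n. (\<alpha> n + \<beta> n) / of_nat n))"
    and ratio: "\<And>n. n \<ge> 1 \<Longrightarrow> norm (\<beta> n - \<alpha> n) \<le> C * (2 * real n + norm (\<alpha> n + \<beta> n))"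
  obtains \<kappa> r where "strict_mono r"
    and "filterlim (\<lambda>m. norm ((\<alpha> (r m) + \<beta> (r m)) / of_nat (r m))) at_top sequentially"
    and "(\<lambda>m. (\<beta> (r m) - \<alpha> (r m)) / (\<alpha> (r m) + \<beta> (r m))) \<longlonglongrightarrow> \<kappa>"
    and "roots_weak_conv (\<lambda>m. p (r m)) (return borel \<kappa>)"
proof -
  define A where "A n = (\<alpha> n + \<beta> n) / of_nat n" for n
  define w where "w n = (\<beta> n - \<alpha> n) / (\<alpha> n + \<beta> n)" for n
  have "\<not> bdd_above (range (\<lambda>n. norm (A n)))"
    using unbounded bdd_above_norm[of "range A"] by (simp add: A_def image_image)
  then obtain r0 where r0: "strict_mono r0" "\<And>m. real m \<le> norm (A (r0 m))"
    by (rule unbounded_subseq) auto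
  define r1 where "r1 m = r0 (Suc m)" for m
  have r1: "strict_mono r1"
    using r0(1) by (simp add: r1_def strict_mono_def)
  have A_r1: "real m + 1 \<le> norm (A (r1 m))" for m
    using r0(2)[of "Suc m"] by (simp add: r1_def)
  have "norm (w (r1 m)) \<le> 3 * C" for m
  proof -
    define n where "n = r1 m"
    have A1: "1 \<le> norm (\<alpha> n + \<beta> n) / real n"
      using A_r1[of m] by (simp add: n_def A_def norm_divide)
    then have n: "n \<ge> 1"
      by (cases "n = 0") auto
    with A1 have An: "real n \<le> norm (\<alpha> n + \<beta> n)"
      by (simp add: le_divide_eq)
    with n have pos: "norm (\<alpha> n + \<beta> n) > 0"
      by linarith
    have "norm (w n) \<le> C * (2 * real n + norm (\<alpha> n + \<beta> n)) / norm (\<alpha> n + \<beta> n)"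
      using ratio[OF n] pos by (simp add: w_def norm_divide divide_right_mono)
    also have "\<dots> \<le> 3 * C"
    proof -
      have "0 \<le> C * (2 * real n + norm (\<alpha> n + \<beta> n))"
        using ratio[OF n] norm_ge_zero order_trans by blast
      moreover have "2 * real n + norm (\<alpha> n + \<beta> n) > 0"
        using pos by (simp add: add_nonneg_pos)
      ultimately have "C \<ge> 0"
        by (simp add: zero_le_mult_iff)
      then have "C * (2 * real n + norm (\<alpha> n + \<beta> n)) \<le> C * (3 * norm (\<alpha> n + \<beta> n))"
        using An by (intro mult_left_mono) auto
      with pos show ?thesis
        by (simp add: divide_le_eq)
    qed
    finally show ?thesis by (simp add: n_def)
  qed
  then have "bounded (range (w \<circ> r1))"
    by (auto simp: bounded_iff)
  then obtain \<kappa> s where s: "strict_mono s" and ws: "(w \<circ> r1 \<circ> s) \<longlonglongrightarrow> \<kappa>"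
    using bounded_imp_convergent_subsequence by blast
  define r where "r = r1 \<circ> s"
  have r: "strict_mono r"
    unfolding r_def using r1 s by (rule strict_mono_o)
  have A_lim: "filterlim (\<lambda>m. norm (A (r m))) at_top sequentially"
  proof (rule filterlim_at_top_mono[OF filterlim_real_sequentially])
    show "eventually (\<lambda>m. real m \<le> norm (A (r m))) sequentially"
    proof (intro always_eventually allI)
      fix m
      have "real m \<le> real (s m) + 1"
        using seq_suble[OF s, of m] by simp
      also have "\<dots> \<le> norm (A (r m))"
        using A_r1[of "s m"] by (simp add: r_def)
      finally show "real m \<le> norm (A (r m))" .
    qed
  qed
  have w_lim: "(\<lambda>m. w (r m)) \<longlonglongrightarrow> \<kappa>"
    using ws by (simp add: r_def o_def)
  have "roots_weak_conv (\<lambda>m. p (r m)) (return borel \<kappa>)"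
    unfolding p_def using deg[unfolded p_def] A_lim w_lim
    by (intro jacobi_roots_concentrate) (simp_all add: A_def w_def norm_divide)
  with r A_lim w_lim show ?thesis
    by (intro that) (simp_all add: A_def w_def)
qed

lemma param_ratio_tendsto_zero:
  fixes \<alpha> \<beta> :: "nat \<Rightarrow> complex" and r :: "nat \<Rightarrow> nat"
  assumes "bounded (range (\<lambda>n. (\<beta> n - \<alpha> n) / of_nat n))"
    and "filterlim (\<lambda>m. norm ((\<alpha> (r m) + \<beta> (r m)) / of_nat (r m))) at_top sequentially"
  shows "(\<lambda>m. (\<beta> (r m) - \<alpha> (r m)) / (\<alpha> (r m) + \<beta> (r m))) \<longlonglongrightarrow> 0"
proof -
  define A where "A m = (\<alpha> (r m) + \<beta> (r m)) / of_nat (r m)" for m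
  define B where "B m = (\<beta> (r m) - \<alpha> (r m)) / of_nat (r m)" for m
  obtain M where M: "\<And>m. norm (B m) \<le> M"
    using assms(1) unfolding bounded_iff B_def by auto
  have A: "filterlim (\<lambda>m. norm (A m)) at_top sequentially"
    using assms(2) by (simp only: A_def)
  have "(\<lambda>m. norm (inverse (A m))) \<longlonglongrightarrow> 0"
    using tendsto_inverse_0_at_top[OF A] by (simp only: norm_inverse)
  then have "(\<lambda>m. inverse (A m)) \<longlonglongrightarrow> 0"
    by (rule tendsto_norm_zero_cancel)
  with always_eventually[OF allI[OF M]] have "(\<lambda>m. B m * inverse (A m)) \<longlonglongrightarrow> 0"
    by (rule lim_null_mult_left_bounded)
  moreover have "eventually (\<lambda>m. norm (A m) \<ge> 1) sequentially"
    using A unfolding filterlim_at_top by blast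
  then have "eventually (\<lambda>m. B m * inverse (A m)
      = (\<beta> (r m) - \<alpha> (r m)) / (\<alpha> (r m) + \<beta> (r m))) sequentially"
  proof (rule eventually_mono)
    fix m assume "norm (A m) \<ge> 1"
    then have "A m \<noteq> 0"
      by auto
    then have "of_nat (r m) \<noteq> (0 :: complex)" and "\<alpha> (r m) + \<beta> (r m) \<noteq> 0"
      by (auto simp: A_def)
    then show "B m * inverse (A m) = (\<beta> (r m) - \<alpha> (r m)) / (\<alpha> (r m) + \<beta> (r m))"
      by (simp add: A_def B_def divide_inverse)
  qed
  ultimately show ?thesis
    by (simp add: tendsto_cong)
qed

lemma bounded_diff_param:
  fixes \<alpha> \<beta> :: "nat \<Rightarrow> complex"
  assumes "bounded (range (\<lambda>n. (\<alpha> n + \<beta> n) / of_nat n))"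
    and ratio: "\<And>n. n \<ge> 1 \<Longrightarrow> norm (\<beta> n - \<alpha> n) \<le> C * (2 * real n + norm (\<alpha> n + \<beta> n))"
  shows "bounded (range (\<lambda>n. (\<beta> n - \<alpha> n) / of_nat n))"
proof -
  obtain M where M: "\<And>n. norm ((\<alpha> n + \<beta> n) / of_nat n) \<le> M"
    using assms(1) unfolding bounded_iff by blast
  have "norm ((\<beta> n - \<alpha> n) / of_nat n) \<le> \<bar>C\<bar> * (2 + M)" for n
  proof (cases "n \<ge> 1")
    case True
    have "norm ((\<beta> n - \<alpha> n) / of_nat n) = norm (\<beta> n - \<alpha> n) / real n"
      by (simp add: norm_divide)
    also have "\<dots> \<le> C * (2 * real n + norm (\<alpha> n + \<beta> n)) / real n"
      by (rule divide_right_mono[OF ratio[OF True]]) simp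
    also have "\<dots> = C * (2 + norm ((\<alpha> n + \<beta> n) / of_nat n))"
      by (simp only: norm_divide norm_of_nat) (use True in \<open>simp add: field_simps\<close>)
    also have "\<dots> \<le> \<bar>C\<bar> * (2 + M)"
      using M[of n] by (intro mult_mono) auto
    finally show ?thesis .
  next
    case False
    then have "n = 0" by simp
    then show ?thesis
      using M[of 0] by simp
  qed
  then show ?thesis
    unfolding bounded_iff by blast
qed

theorem lemma3:
  fixes \<alpha> \<beta> :: "nat \<Rightarrow> complex" and p :: "nat \<Rightarrow> complex poly"
    and \<mu> \<mu>' :: "complex measure"
  assumes p_def: "\<And>n. p n = jacobi n (\<alpha> n) (\<beta> n)"
    and deg: "\<And>n. degree (p n) = n"
    and mu: "compactly_supported \<mu>" "roots_weak_conv p \<mu>"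
    and mu': "compactly_supported \<mu>'" "roots_weak_conv (\<lambda>n. pderiv (p n)) \<mu>'"
  shows "(bounded (range (\<lambda>n. (\<alpha> n + \<beta> n) / of_nat n)) \<and>
          bounded (range (\<lambda>n. (\<beta> n - \<alpha> n) / of_nat n)))
       \<or> (\<not> bounded (range (\<lambda>n. (\<alpha> n + \<beta> n) / of_nat n)) \<and>
          bounded (range (\<lambda>n. (\<beta> n - \<alpha> n) / of_nat n)) \<and>
          roots_weak_conv p (return borel 0))
       \<or> (\<not> bounded (range (\<lambda>n. (\<alpha> n + \<beta> n) / of_nat n)) \<and>
          \<not> bounded (range (\<lambda>n. (\<beta> n - \<alpha> n) / of_nat n)) \<and>
          (\<exists>\<kappa> :: complex. \<exists>r :: nat \<Rightarrow> nat. strict_mono r \<and>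
             (\<lambda>m. (\<beta> (r m) - \<alpha> (r m)) / (\<alpha> (r m) + \<beta> (r m))) \<longlonglongrightarrow> \<kappa> \<and>
             roots_weak_conv (\<lambda>m. p (r m)) (return borel \<kappa>)))"
proof -
  obtain C where C: "\<And>n. norm (\<beta> n - \<alpha> n) / (2 * real n + norm (\<alpha> n + \<beta> n)) \<le> C"
    using jacobi_param_ratio_bdd_above[OF p_def deg mu] by (auto simp: bdd_above_def)
  have ratio: "norm (\<beta> n - \<alpha> n) \<le> C * (2 * real n + norm (\<alpha> n + \<beta> n))" if "n \<ge> 1" for n
    using C[of n] that by (simp add: pos_divide_le_eq add_pos_nonneg)
  show ?thesis
  proof (cases "bounded (range (\<lambda>n. (\<alpha> n + \<beta> n) / of_nat n))")
    case True
    with bounded_diff_param[OF True ratio] show ?thesis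
      by simp
  next
    case False
    obtain \<kappa> r where r: "strict_mono r"
      and A: "filterlim (\<lambda>m. norm ((\<alpha> (r m) + \<beta> (r m)) / of_nat (r m))) at_top sequentially"
      and w: "(\<lambda>m. (\<beta> (r m) - \<alpha> (r m)) / (\<alpha> (r m) + \<beta> (r m))) \<longlonglongrightarrow> \<kappa>"
      and conv: "roots_weak_conv (\<lambda>m. p (r m)) (return borel \<kappa>)"
      by (rule jacobi_subseq_concentrate[OF p_def deg False ratio])
    show ?thesis
    proof (cases "bounded (range (\<lambda>n. (\<beta> n - \<alpha> n) / of_nat n))")
      case True
      have "\<kappa> = 0"
        using LIMSEQ_unique[OF w param_ratio_tendsto_zero[OF True A]] .
      with roots_weak_conv_subseq_unique[OF mu(2) r conv] False True show ?thesis
        by simp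
    next
      case unbounded: False
      from r w conv have "\<exists>\<kappa> r. strict_mono r \<and>
          (\<lambda>m. (\<beta> (r m) - \<alpha> (r m)) / (\<alpha> (r m) + \<beta> (r m))) \<longlonglongrightarrow> \<kappa> \<and>
          roots_weak_conv (\<lambda>m. p (r m)) (return borel \<kappa>)"
        by blast
      with False unbounded show ?thesis
        by (intro disjI2 conjI)
    qed
  qed
qed

end
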